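(* Let $N\ge 2$ and let $p\ge 3$ be odd. Let $\Lambda=\Lambda^\bullet(\mathbb{C}^{N\times N})$ be the exterior algebra on the $N^2$ odd generators $\Psi_{ij}$ ($1\le i,j\le N$), and let $\Psi$ denote the $N\times N$ matrix with entries $\Psi_{ij}$. Set $\chi:=\frac{1}{\sqrt N}\sum_{i=1}^N\Psi_{ii}$ and $A:=\Psi-\frac{\chi}{\sqrt N}\mathbf 1$, so that $\mathrm{Tr}A=0$ and $\Psi=A+\frac{\chi}{\sqrt N}\mathbf 1$. Then \[ \mathrm{Tr}(\Psi^p)=\mathrm{Tr}(A^p) \] in $\Lambda$. Consequently, writing $\Lambda=\Lambda^\bullet(\chi)\otimes\Lambda^\bullet(\mathfrak{sl}_N)$, where $\Lambda^\bullet(\mathfrak{sl}_N)$ is the exterior subalgebra generated by the traceless linear combinations of the $\Psi_{ij}$ (which contains all entries of $A$), the cochain complex $(\Lambda,\,Q_p)$ with $Q_p(v)=\mathrm{Tr}(\Psi^p)\wedge v$ splits as the tensor product of $\Lambda^\bullet(\chi)$ (with zero differential) and the complex $(\Lambda^\bullet(\mathfrak{sl}_N),\,\mathrm{Tr}(A^p)\wedge\,\cdot\,)$, and the BPS generating function satisfies $Z_{\mathrm{BPS}}(x)=(1+x)\,Z_{\mathrm{red}}(x)$, where $Z_{\mathrm{red}}(x)=\sum_R \dim H^R_{\mathrm{red}}\,x^R$ is the generating function of the cohomology of the traceless complex.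
   Context: Since $Q_p$ raises exterior degree by $p$ and $Q_p^2=0$, for each $R$ one has maps $Q_R:\Lambda^R\to\Lambda^{R+p}$ and the degree-$R$ cohomology $H^R=\ker Q_R/\operatorname{im}Q_{R-p}$ (with $Q_{R-p}=0$ for $R<p$). The BPS generating function is $Z_{\mathrm{BPS}}(x)=\sum_{R=0}^{N^2}h_Rx^R$ with $h_R=\dim H^R$; $h_R$ equals the number of zero-energy states of $H=\{Q_p,Q_p^\dagger\}$ in fermion number $R$. The cohomology of the traceless complex is defined in the same way with $\Lambda^\bullet(\mathfrak{sl}_N)$ and $\mathrm{Tr}(A^p)$ in place of $\Lambda$ and $\mathrm{Tr}(\Psi^p)$. *)

theory Defs
  imports "HOL-Analysis.Analysis" "HOL-Computational_Algebra.Polynomial" "HOL-Library.Function_Algebras"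
begin

text \<open>Generators are indexed by pairs (i,j) with i,j < N (0-based).
  An element of the exterior algebra is a coefficient function on finite sets
  of generators: f S is the coefficient of the monomial e_S = Psi_{s1} ^ ... ^ Psi_{sk},
  where s1 < ... < sk in the lexicographic order on pairs.\<close>

type_synonym gen = "nat \<times> nat"
type_synonym ext = "gen set \<Rightarrow> complex"

definition gens :: "nat \<Rightarrow> gen set" where
  "gens N = {0..<N} \<times> {0..<N}"

definition gen_less :: "gen \<Rightarrow> gen \<Rightarrow> bool" where
  "gen_less a b \<longleftrightarrow> fst a < fst b \<or> (fst a = fst b \<and> snd a < snd b)"

text \<open>Sign of e_S ^ e_T = sign * e_(S \<union> T) for disjoint S, T.\<close>
definition wsign :: "gen set \<Rightarrow> gen set \<Rightarrow> complex" where
  "wsign S T = (-1) ^ card {(s,t). s \<in> S \<and> t \<in> T \<and> gen_less t s}"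

definition ext_zero :: ext where "ext_zero = (\<lambda>S. 0)"
definition ext_one :: ext where "ext_one = (\<lambda>S. if S = {} then 1 else 0)"
definition ext_add :: "ext \<Rightarrow> ext \<Rightarrow> ext" where "ext_add f g = (\<lambda>S. f S + g S)"
definition ext_scale :: "complex \<Rightarrow> ext \<Rightarrow> ext" where "ext_scale c f = (\<lambda>S. c * f S)"
definition ext_diff :: "ext \<Rightarrow> ext \<Rightarrow> ext" where "ext_diff f g = (\<lambda>S. f S - g S)"

definition wedge :: "ext \<Rightarrow> ext \<Rightarrow> ext" where
  "wedge f g = (\<lambda>U. if finite U then (\<Sum>S\<in>Pow U. wsign S (U - S) * f S * g (U - S)) else 0)"

definition ext_sum :: "'i set \<Rightarrow> ('i \<Rightarrow> ext) \<Rightarrow> ext" where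
  "ext_sum I F = (\<lambda>S. \<Sum>i\<in>I. F i S)"

definition Lam :: "nat \<Rightarrow> ext set" where
  "Lam N = {f. \<forall>S. f S \<noteq> 0 \<longrightarrow> S \<subseteq> gens N}"

definition Lam_deg :: "nat \<Rightarrow> nat \<Rightarrow> ext set" where
  "Lam_deg N R = {f \<in> Lam N. \<forall>S. f S \<noteq> 0 \<longrightarrow> card S = R}"

definition Psi :: "nat \<Rightarrow> nat \<Rightarrow> ext" where
  "Psi i j = (\<lambda>S. if S = {(i,j)} then 1 else 0)"

type_synonym emat = "nat \<Rightarrow> nat \<Rightarrow> ext"

definition mmul :: "nat \<Rightarrow> emat \<Rightarrow> emat \<Rightarrow> emat" where
  "mmul N X Y = (\<lambda>i j. ext_sum {0..<N} (\<lambda>k. wedge (X i k) (Y k j)))"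

definition mid :: emat where
  "mid = (\<lambda>i j. if i = j then ext_one else ext_zero)"

fun mpow :: "nat \<Rightarrow> emat \<Rightarrow> nat \<Rightarrow> emat" where
  "mpow N X 0 = mid"
| "mpow N X (Suc n) = mmul N (mpow N X n) X"

definition mtrace :: "nat \<Rightarrow> emat \<Rightarrow> ext" where
  "mtrace N X = ext_sum {0..<N} (\<lambda>i. X i i)"

definition chi :: "nat \<Rightarrow> ext" where
  "chi N = ext_scale (1 / complex_of_real (sqrt (real N))) (ext_sum {0..<N} (\<lambda>i. Psi i i))"

definition Amat :: "nat \<Rightarrow> emat" where
  "Amat N = (\<lambda>i j. if i = j
      then ext_diff (Psi i j) (ext_scale (1 / complex_of_real (sqrt (real N))) (chi N))
      else Psi i j)"

definition TrPsi :: "nat \<Rightarrow> nat \<Rightarrow> ext" where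
  "TrPsi N p = mtrace N (mpow N Psi p)"

definition TrA :: "nat \<Rightarrow> nat \<Rightarrow> ext" where
  "TrA N p = mtrace N (mpow N (Amat N) p)"

definition sl_lin :: "nat \<Rightarrow> ext set" where
  "sl_lin N = {f. (\<forall>S. f S \<noteq> 0 \<longrightarrow> (\<exists>g\<in>gens N. S = {g})) \<and> (\<Sum>i<N. f {(i,i)}) = 0}"

fun wedge_list :: "ext list \<Rightarrow> ext" where
  "wedge_list [] = ext_one"
| "wedge_list (f # fs) = wedge f (wedge_list fs)"

definition sl_deg :: "nat \<Rightarrow> nat \<Rightarrow> ext set" where
  "sl_deg N R = module.span ext_scale
     {wedge_list fs | fs. length fs = R \<and> set fs \<subseteq> sl_lin N}"

definition cdim :: "ext set \<Rightarrow> nat" where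
  "cdim V = vector_space.dim ext_scale V"

text \<open>dim H^R of the complex (C_R, w ^ -) with w of degree p:
  dim ker(Q_R) - dim im(Q_{R-p}), with Q_{R-p} = 0 for R < p.\<close>
definition coh_dim :: "(nat \<Rightarrow> ext set) \<Rightarrow> ext \<Rightarrow> nat \<Rightarrow> nat \<Rightarrow> nat" where
  "coh_dim C w p R =
     cdim {v \<in> C R. wedge w v = ext_zero}
     - (if R < p then 0 else cdim (wedge w ` C (R - p)))"

definition h_BPS :: "nat \<Rightarrow> nat \<Rightarrow> nat \<Rightarrow> nat" where
  "h_BPS N p R = coh_dim (Lam_deg N) (TrPsi N p) p R"

definition h_red :: "nat \<Rightarrow> nat \<Rightarrow> nat \<Rightarrow> nat" where
  "h_red N p R = coh_dim (sl_deg N) (TrA N p) p R"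

definition Z_BPS :: "nat \<Rightarrow> nat \<Rightarrow> nat poly" where
  "Z_BPS N p = (\<Sum>R\<le>N^2. monom (h_BPS N p R) R)"

definition Z_red :: "nat \<Rightarrow> nat \<Rightarrow> nat poly" where
  "Z_red N p = (\<Sum>R\<le>N^2. monom (h_red N p R) R)"

end

theory Submission
  imports Defs
begin

text \<open>Write \<open>Psi = A + c 1\<close> with \<open>c = chi / sqrt N\<close>. Since \<open>c\<close> is odd, \<open>c \<and> c = 0\<close> and \<open>c\<close>
  graded-commutes with everything, so \<open>Psi^p = A^p + c \<and> A^(p-1)\<close> for odd \<open>p\<close>; and the trace of an
  even power of a matrix with odd entries vanishes, hence \<open>Tr Psi^p = Tr A^p\<close>.

  The contraction dual to \<open>chi\<close> kills the traceless subalgebra and is a left inverse of \<open>chi \<and> -\<close> on it,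
  so every homogeneous element is uniquely \<open>a + chi \<and> b\<close> with \<open>a\<close>, \<open>b\<close> traceless. As \<open>Tr A^p\<close> is
  traceless and anticommutes with \<open>chi\<close>, the differential preserves this splitting; kernels and images
  split accordingly, giving \<open>h_BPS R = h_red R + h_red (R - 1)\<close>, i.e. \<open>Z_BPS = (1 + x) Z_red\<close>.\<close>

section \<open>Finite-dimensional subspaces of a vector space\<close>

context vector_space
begin

lemma obtain_finite_basis:
  assumes "V \<subseteq> span W" "finite W"
  obtains B where "B \<subseteq> V" "independent B" "V \<subseteq> span B" "finite B" "card B = dim V"
proof -
  obtain B where B: "B \<subseteq> V" "independent B" "V \<subseteq> span B"
    by (rule maximal_independent_subset)
  have "finite B"
    using independent_span_bound[OF assms(2) B(2)] B(1) assms(1) by blast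
  with B basis_card_eq_dim[OF B(1,3,2)] that show thesis
    by blast
qed

lemma dim_zero_space: "dim {0} = 0"
  using dim_span_eq_card_independent[OF independent_empty] by simp

lemma dim_mono_finite:
  assumes "V \<subseteq> U" "U \<subseteq> span W" "finite W"
  shows "dim V \<le> dim U"
proof -
  obtain B where "B \<subseteq> U" "U \<subseteq> span B" "finite B" "card B = dim U"
    using obtain_finite_basis[OF assms(2,3)] by metis
  then show ?thesis
    using dim_le_card[of V B] assms(1) by auto
qed

lemma disjoint_independent_Un:
  assumes BX: "independent BX" "finite BX" and BY: "independent BY" "finite BY"
    and inter: "span BX \<inter> span BY = {0}"
  shows "BX \<inter> BY = {}" and "independent (BX \<union> BY)"
proof -
  show disj: "BX \<inter> BY = {}"
  proof (rule ccontr)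
    assume "BX \<inter> BY \<noteq> {}"
    then obtain x where x: "x \<in> BX" "x \<in> BY" by blast
    then have "x \<in> span BX \<inter> span BY" using span_base by blast
    then have "x = 0" using inter by blast
    then show False using x(1) BX(1) dependent_zero by blast
  qed
  show "independent (BX \<union> BY)"
  proof (rule independent_if_scalars_zero)
    show "finite (BX \<union> BY)" using BX(2) BY(2) by simp
  next
    fix u z assume sum0: "(\<Sum>v\<in>BX \<union> BY. u v *s v) = 0" and z: "z \<in> BX \<union> BY"
    define sX where "sX = (\<Sum>v\<in>BX. u v *s v)"
    define sY where "sY = (\<Sum>v\<in>BY. u v *s v)"
    have "sX + sY = 0"
      using sum0 BX(2) BY(2) disj by (simp add: sum.union_disjoint sX_def sY_def)
    then have "sX = - sY"
      by (simp add: eq_neg_iff_add_eq_0)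
    moreover have "sX \<in> span BX" "sY \<in> span BY"
      unfolding sX_def sY_def by (auto intro: span_sum span_scale span_base)
    ultimately have "sX \<in> span BX \<inter> span BY"
      using span_neg by fastforce
    then have "sX = 0" "sY = 0"
      using inter \<open>sX = - sY\<close> by auto
    then show "u z = 0"
      using z independentD[OF BX(1,2) order_refl, of u] independentD[OF BY(1,2) order_refl, of u]
      unfolding sX_def sY_def by blast
  qed
qed

lemma dim_sums_disjoint:
  assumes X: "subspace X" and Y: "subspace Y" and XY: "X \<inter> Y = {0}"
    and fin: "X \<subseteq> span W" "Y \<subseteq> span W" "finite W"
  shows "dim {x + y | x y. x \<in> X \<and> y \<in> Y} = dim X + dim Y"
proof -
  obtain BX where BX: "BX \<subseteq> X" "independent BX" "X \<subseteq> span BX" "finite BX" "card BX = dim X"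
    using obtain_finite_basis[OF fin(1,3)] by metis
  obtain BY where BY: "BY \<subseteq> Y" "independent BY" "Y \<subseteq> span BY" "finite BY" "card BY = dim Y"
    using obtain_finite_basis[OF fin(2,3)] by metis
  have span_BX: "span BX = X" and span_BY: "span BY = Y"
    using span_subspace BX BY X Y by auto
  note Un = disjoint_independent_Un[OF BX(2,4) BY(2,4)]
  have "{x + y | x y. x \<in> X \<and> y \<in> Y} = span (BX \<union> BY)"
    by (simp add: span_Un span_BX span_BY)
  then have "dim {x + y | x y. x \<in> X \<and> y \<in> Y} = card (BX \<union> BY)"
    using dim_span_eq_card_independent Un(2) XY span_BX span_BY by simp
  also have "\<dots> = dim X + dim Y"
    using BX(4,5) BY(4,5) Un(1) XY span_BX span_BY by (simp add: card_Un_disjoint)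
  finally show ?thesis .
qed

lemma dim_image_inj_on:
  assumes f: "module_hom scale scale f" and Y: "subspace Y" "inj_on f Y"
    and fin: "Y \<subseteq> span W" "finite W"
  shows "dim (f ` Y) = dim Y"
proof -
  obtain B where B: "B \<subseteq> Y" "independent B" "Y \<subseteq> span B" "finite B" "card B = dim Y"
    using obtain_finite_basis[OF fin] by metis
  have span_B: "span B = Y"
    using span_subspace B Y by auto
  have "independent (f ` B)"
    using module_hom.independent_injective_image[OF f B(2)] Y(2) span_B by simp
  moreover have "f ` Y = span (f ` B)"
    using module_hom.span_image[OF f] span_B by simp
  ultimately have "dim (f ` Y) = card (f ` B)"
    using dim_span_eq_card_independent by simp
  also have "\<dots> = dim Y"
    using card_image[OF inj_on_subset[OF Y(2) B(1)]] B(5) by simp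
  finally show ?thesis .
qed

end


lemma sum_fun_apply: "(\<Sum>i\<in>I. F i) x = (\<Sum>i\<in>I. F i x)"
  by (induction I rule: infinite_finite_induct) auto

lemma ext_zero_eq: "ext_zero = 0"
  by (simp add: ext_zero_def fun_eq_iff)

lemma ext_add_eq: "ext_add f g = f + g"
  by (simp add: ext_add_def fun_eq_iff)

lemma ext_diff_eq: "ext_diff f g = f - g"
  by (simp add: ext_diff_def fun_eq_iff)

lemma ext_sum_eq: "ext_sum I F = (\<Sum>i\<in>I. F i)"
  by (simp add: ext_sum_def fun_eq_iff sum_fun_apply)

lemma ext_scale_apply [simp]: "ext_scale c f S = c * f S"
  by (simp add: ext_scale_def)

interpretation Ext: vector_space ext_scale
  by unfold_locales (auto simp: ext_scale_def fun_eq_iff algebra_simps)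

lemma ext_scale_minus_one: "ext_scale (-1) f = - f"
  by (simp add: fun_eq_iff)

lemma ext_eq_0_if_eq_uminus: "(f :: ext) = - f \<Longrightarrow> f = 0"
proof (rule ext)
  fix S assume "f = - f"
  then have "f S + f S = 0"
    by (metis add.right_inverse uminus_apply)
  then show "f S = 0 S" by simp
qed


section \<open>The wedge product\<close>

definition inversions :: "gen set \<Rightarrow> gen set \<Rightarrow> (gen \<times> gen) set" where
  "inversions S T = {(s, t). s \<in> S \<and> t \<in> T \<and> gen_less t s}"

lemma wsign_eq_inversions: "wsign S T = (-1) ^ card (inversions S T)"
  by (simp add: wsign_def inversions_def)

lemma finite_inversions: "finite S \<Longrightarrow> finite T \<Longrightarrow> finite (inversions S T)"
  by (rule finite_subset[of _ "S \<times> T"]) (auto simp: inversions_def)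

lemma gen_less_linear: "a \<noteq> b \<Longrightarrow> gen_less a b \<or> gen_less b a"
  by (cases a; cases b) (auto simp: gen_less_def)

lemma gen_less_asym: "gen_less a b \<Longrightarrow> \<not> gen_less b a"
  by (auto simp: gen_less_def)

lemma wsign_empty_left [simp]: "wsign {} T = 1"
  and wsign_empty_right [simp]: "wsign S {} = 1"
  by (simp_all add: wsign_def)

lemma wsign_mult_self [simp]: "wsign S T * wsign S T = 1"
  by (simp add: wsign_def flip: power_add mult_2)

lemma wsign_Un_left:
  assumes "S \<inter> T = {}" "finite S" "finite T" "finite V"
  shows "wsign (S \<union> T) V = wsign S V * wsign T V"
proof -
  have "inversions (S \<union> T) V = inversions S V \<union> inversions T V"
    and "inversions S V \<inter> inversions T V = {}"
    using assms(1) by (auto simp: inversions_def)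
  then show ?thesis
    using assms by (simp add: wsign_eq_inversions card_Un_disjoint finite_inversions power_add)
qed

lemma wsign_Un_right:
  assumes "T \<inter> V = {}" "finite S" "finite T" "finite V"
  shows "wsign S (T \<union> V) = wsign S T * wsign S V"
proof -
  have "inversions S (T \<union> V) = inversions S T \<union> inversions S V"
    and "inversions S T \<inter> inversions S V = {}"
    using assms(1) by (auto simp: inversions_def)
  then show ?thesis
    using assms by (simp add: wsign_eq_inversions card_Un_disjoint finite_inversions power_add)
qed

text \<open>Every pair in \<open>S \<times> T\<close> is an inversion of exactly one of \<open>(S, T)\<close> and \<open>(T, S)\<close>.\<close>

lemma wsign_swap:
  assumes "S \<inter> T = {}" "finite S" "finite T"
  shows "wsign S T * wsign T S = (-1) ^ (card S * card T)"
proof -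
  let ?flip = "\<lambda>(a, b). (b, a)"
  have split: "S \<times> T = inversions S T \<union> ?flip ` inversions T S"
  proof (intro equalityI subsetI)
    fix x assume "x \<in> S \<times> T"
    then obtain s t where x: "x = (s, t)" "s \<in> S" "t \<in> T" by blast
    then have "s \<noteq> t" using assms(1) by blast
    then consider "gen_less t s" | "gen_less s t" using gen_less_linear by blast
    then show "x \<in> inversions S T \<union> ?flip ` inversions T S"
    proof cases
      case 1
      then show ?thesis using x by (simp add: inversions_def)
    next
      case 2
      then have "(t, s) \<in> inversions T S" using x by (simp add: inversions_def)
      then show ?thesis using x by (auto simp: image_iff intro!: bexI[of _ "(t, s)"])
    qed
  qed (auto simp: inversions_def)
  have disj: "inversions S T \<inter> ?flip ` inversions T S = {}"
    using gen_less_asym by (auto simp: inversions_def)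
  have "inj_on ?flip (inversions T S)"
    by (auto simp: inj_on_def)
  then have "card (S \<times> T) = card (inversions S T) + card (inversions T S)"
    unfolding split using assms disj
    by (simp add: card_Un_disjoint finite_inversions card_image)
  then show ?thesis
    by (simp add: wsign_eq_inversions card_cartesian_product power_add)
qed

lemma wedge_add_left: "wedge (f + g) h = wedge f h + wedge g h"
  by (auto simp: wedge_def fun_eq_iff algebra_simps sum.distrib)

lemma wedge_add_right: "wedge h (f + g) = wedge h f + wedge h g"
  by (auto simp: wedge_def fun_eq_iff algebra_simps sum.distrib)

lemma wedge_scale_left: "wedge (ext_scale c f) g = ext_scale c (wedge f g)"
  by (auto simp: wedge_def fun_eq_iff algebra_simps sum_distrib_left)

lemma wedge_scale_right: "wedge g (ext_scale c f) = ext_scale c (wedge g f)"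
  by (auto simp: wedge_def fun_eq_iff algebra_simps sum_distrib_left)

lemma module_hom_wedge_left: "module_hom ext_scale ext_scale (\<lambda>f. wedge f g)"
  by unfold_locales (simp_all add: wedge_add_left wedge_scale_left)

lemma module_hom_wedge_right: "module_hom ext_scale ext_scale (wedge f)"
  by unfold_locales (simp_all add: wedge_add_right wedge_scale_right)

lemmas wedge_zero_left [simp] = module_hom.zero[OF module_hom_wedge_left]
  and wedge_uminus_left = module_hom.neg[OF module_hom_wedge_left]
  and wedge_sum_left = module_hom.sum[OF module_hom_wedge_left]

lemmas wedge_zero_right [simp] = module_hom.zero[OF module_hom_wedge_right]
  and wedge_uminus_right = module_hom.neg[OF module_hom_wedge_right]
  and wedge_diff_right = module_hom.diff[OF module_hom_wedge_right]
  and wedge_sum_right = module_hom.sum[OF module_hom_wedge_right]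

lemma wedge_assoc_sign:
  assumes "finite U" "S \<subseteq> U" "R \<subseteq> S"
  shows "wsign R (U - R) * wsign (S - R) (U - S) = wsign S (U - S) * wsign R (S - R)"
proof -
  have fin: "finite S" "finite R"
    using assms by (auto intro: finite_subset)
  have U_R: "(S - R) \<union> (U - S) = U - R" and S: "R \<union> (S - R) = S"
    using assms by auto
  have "wsign R ((S - R) \<union> (U - S)) = wsign R (S - R) * wsign R (U - S)"
    using fin assms(1) by (intro wsign_Un_right) auto
  moreover have "wsign (R \<union> (S - R)) (U - S) = wsign R (U - S) * wsign (S - R) (U - S)"
    using fin assms(1) by (intro wsign_Un_left) auto
  ultimately show ?thesis
    unfolding U_R S by simp
qed

lemma wedge_wedge_left_apply:
  assumes "finite U"
  shows "wedge (wedge f g) h U = (\<Sum>(S, R)\<in>Sigma (Pow U) Pow.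
    wsign S (U - S) * (wsign R (S - R) * f R * g (S - R)) * h (U - S))"
proof -
  have "wedge (wedge f g) h U = (\<Sum>S\<in>Pow U. \<Sum>R\<in>Pow S.
      wsign S (U - S) * (wsign R (S - R) * f R * g (S - R)) * h (U - S))"
    using assms by (auto simp: wedge_def sum_distrib_left sum_distrib_right
        intro!: sum.cong dest: finite_subset)
  then show ?thesis
    using assms by (simp add: sum.Sigma finite_subset)
qed

lemma wedge_wedge_right_apply:
  assumes "finite U"
  shows "wedge f (wedge g h) U = (\<Sum>(R, T)\<in>Sigma (Pow U) (\<lambda>R. Pow (U - R)).
    wsign R (U - R) * f R * (wsign T (U - R - T) * g T * h (U - R - T)))"
proof -
  have "wedge f (wedge g h) U = (\<Sum>R\<in>Pow U. \<Sum>T\<in>Pow (U - R).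
      wsign R (U - R) * f R * (wsign T (U - R - T) * g T * h (U - R - T)))"
    using assms by (auto simp: wedge_def sum_distrib_left sum_distrib_right
        intro!: sum.cong dest: finite_subset)
  then show ?thesis
    using assms by (simp add: sum.Sigma)
qed

text \<open>The two expansions are sums over chains \<open>R \<subseteq> S \<subseteq> U\<close>, matched by \<open>(S, R) \<mapsto> (R, S - R)\<close>.\<close>

lemma wedge_assoc: "wedge (wedge f g) h = wedge f (wedge g h)"
proof (rule ext)
  fix U :: "gen set"
  show "wedge (wedge f g) h U = wedge f (wedge g h) U"
  proof (cases "finite U")
    case False
    then show ?thesis by (simp add: wedge_def)
  next
    case fin: True
    have summand: "wsign R (U - R) * f R * (wsign (S - R) (U - R - (S - R)) * g (S - R) * h (U - R - (S - R)))
        = wsign S (U - S) * (wsign R (S - R) * f R * g (S - R)) * h (U - S)"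
      if "S \<subseteq> U" "R \<subseteq> S" for S R
    proof -
      have "U - R - (S - R) = U - S"
        using that by auto
      then show ?thesis
        using wedge_assoc_sign[OF fin that] by (simp add: algebra_simps)
    qed
    show ?thesis
      unfolding wedge_wedge_left_apply[OF fin] wedge_wedge_right_apply[OF fin]
    proof (rule sum.reindex_bij_witness[where i = "\<lambda>(R, T). (R \<union> T, R)" and j = "\<lambda>(S, R). (R, S - R)"])
      fix a assume "a \<in> Sigma (Pow U) Pow"
      then obtain S R where a: "a = (S, R)" "S \<subseteq> U" "R \<subseteq> S" by auto
      show "(\<lambda>(R, T). (R \<union> T, R)) ((\<lambda>(S, R). (R, S - R)) a) = a"
        using a by (simp add: Un_absorb1)
      show "(\<lambda>(S, R). (R, S - R)) a \<in> (SIGMA R:Pow U. Pow (U - R))"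
        using a by auto
      show "(case (\<lambda>(S, R). (R, S - R)) a of (R, T) \<Rightarrow>
            wsign R (U - R) * f R * (wsign T (U - R - T) * g T * h (U - R - T))) =
          (case a of (S, R) \<Rightarrow> wsign S (U - S) * (wsign R (S - R) * f R * g (S - R)) * h (U - S))"
        unfolding a(1) using summand[OF a(2,3)] by (simp only: prod.case)
    next
      fix b assume "b \<in> (SIGMA R:Pow U. Pow (U - R))"
      then obtain R T where b: "b = (R, T)" "R \<subseteq> U" "T \<subseteq> U - R" by auto
      show "(\<lambda>(S, R). (R, S - R)) ((\<lambda>(R, T). (R \<union> T, R)) b) = b"
        using b by auto
      show "(\<lambda>(R, T). (R \<union> T, R)) b \<in> Sigma (Pow U) Pow"
        using b by auto
    qed
  qed
qed

text \<open>The wedge product is \<open>0\<close> on infinite index sets, so the unit laws hold only for elements that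
  vanish there too.\<close>

definition finitary :: "ext \<Rightarrow> bool" where
  "finitary f \<longleftrightarrow> (\<forall>U. infinite U \<longrightarrow> f U = 0)"

definition homogeneous :: "nat \<Rightarrow> ext \<Rightarrow> bool" where
  "homogeneous d f \<longleftrightarrow> (\<forall>S. f S \<noteq> 0 \<longrightarrow> finite S \<and> card S = d)"

lemma finitary_wedge [simp]: "finitary (wedge f g)"
  by (simp add: finitary_def wedge_def)

lemma finitary_if_homogeneous: "homogeneous d f \<Longrightarrow> finitary f"
  by (auto simp: homogeneous_def finitary_def)

lemma subspace_homogeneous: "Ext.subspace {f. homogeneous d f}"
  unfolding Ext.subspace_def
proof (intro conjI ballI allI)
  fix f g assume "f \<in> {f. homogeneous d f}" "g \<in> {f. homogeneous d f}"
  then have f: "homogeneous d f" and g: "homogeneous d g" by simp_all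
  have "finite S \<and> card S = d" if "(f + g) S \<noteq> 0" for S
  proof -
    have "f S \<noteq> 0 \<or> g S \<noteq> 0"
      using that by auto
    then show ?thesis
      using f g unfolding homogeneous_def by blast
  qed
  then show "f + g \<in> {f. homogeneous d f}"
    by (simp add: homogeneous_def)
qed (auto simp: homogeneous_def)

lemma homogeneous_ext_one: "homogeneous 0 ext_one"
  by (auto simp: homogeneous_def ext_one_def)

lemma homogeneous_Psi: "homogeneous 1 (Psi i j)"
  by (auto simp: homogeneous_def Psi_def)

lemma ext_one_wedge: "finitary f \<Longrightarrow> wedge ext_one f = f"
proof (rule ext)
  fix U assume f: "finitary f"
  show "wedge ext_one f U = f U"
  proof (cases "finite U")
    case True
    then have "wedge ext_one f U = (\<Sum>S\<in>Pow U. wsign S (U - S) * ext_one S * f (U - S))"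
      by (simp add: wedge_def)
    also have "\<dots> = (\<Sum>S\<in>Pow U. if S = {} then f U else 0)"
      by (rule sum.cong) (auto simp: ext_one_def)
    also have "\<dots> = f U"
      using True by (subst sum.delta) auto
    finally show ?thesis .
  qed (use f in \<open>auto simp: wedge_def finitary_def\<close>)
qed

lemma wedge_ext_one: "finitary f \<Longrightarrow> wedge f ext_one = f"
proof (rule ext)
  fix U assume f: "finitary f"
  show "wedge f ext_one U = f U"
  proof (cases "finite U")
    case True
    then have "wedge f ext_one U = (\<Sum>S\<in>Pow U. wsign S (U - S) * f S * ext_one (U - S))"
      by (simp add: wedge_def)
    also have "\<dots> = (\<Sum>S\<in>Pow U. if S = U then f U else 0)"
      by (rule sum.cong) (auto simp: ext_one_def)
    also have "\<dots> = f U"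
      using True by (subst sum.delta) auto
    finally show ?thesis .
  qed (use f in \<open>auto simp: wedge_def finitary_def\<close>)
qed

lemma homogeneous_wedge:
  assumes "homogeneous a f" "homogeneous b g"
  shows "homogeneous (a + b) (wedge f g)"
  unfolding homogeneous_def
proof (intro allI impI)
  fix U assume "wedge f g U \<noteq> 0"
  then have fin: "finite U" and "(\<Sum>S\<in>Pow U. wsign S (U - S) * f S * g (U - S)) \<noteq> 0"
    by (auto simp: wedge_def split: if_splits)
  then obtain S where S: "S \<subseteq> U" "f S \<noteq> 0" "g (U - S) \<noteq> 0"
    by (elim sum.not_neutral_contains_not_neutral) auto
  then have "card U = card S + card (U - S)"
    using fin by (metis card_Diff_subset card_mono finite_subset le_add_diff_inverse)
  then show "finite U \<and> card U = a + b"
    using fin S assms by (auto simp: homogeneous_def)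
qed

lemma wedge_commute:
  assumes f: "homogeneous a f" and g: "homogeneous b g"
  shows "wedge f g = ext_scale ((-1) ^ (a * b)) (wedge g f)"
proof (rule ext)
  fix U :: "gen set"
  show "wedge f g U = ext_scale ((-1) ^ (a * b)) (wedge g f) U"
  proof (cases "finite U")
    case fin: True
    have "wedge g f U = (\<Sum>S\<in>Pow U. wsign S (U - S) * g S * f (U - S))"
      using fin by (simp add: wedge_def)
    also have "\<dots> = (\<Sum>S\<in>Pow U. wsign (U - S) S * g (U - S) * f S)"
      by (rule sum.reindex_bij_witness[where i = "\<lambda>S. U - S" and j = "\<lambda>S. U - S"])
        (auto simp: double_diff)
    finally have swap: "wedge g f U = \<dots>" .
    have summand: "wsign S (U - S) * f S * g (U - S)
        = (-1) ^ (a * b) * (wsign (U - S) S * g (U - S) * f S)" if "S \<subseteq> U" for S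
    proof (cases "f S = 0 \<or> g (U - S) = 0")
      case False
      then have "card S = a" "card (U - S) = b"
        using f g by (auto simp: homogeneous_def)
      then have "wsign S (U - S) * wsign (U - S) S = (-1) ^ (a * b)"
        using wsign_swap[of S "U - S"] fin that finite_subset by auto
      then have "wsign S (U - S) = (-1) ^ (a * b) * wsign (U - S) S"
        by (metis mult.assoc mult.right_neutral wsign_mult_self)
      then show ?thesis by simp
    qed auto
    have "wedge f g U = (\<Sum>S\<in>Pow U. wsign S (U - S) * f S * g (U - S))"
      using fin by (simp add: wedge_def)
    also have "\<dots> = (\<Sum>S\<in>Pow U. (-1) ^ (a * b) * (wsign (U - S) S * g (U - S) * f S))"
      by (rule sum.cong) (simp_all add: summand)
    also have "\<dots> = (-1) ^ (a * b) * wedge g f U"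
      by (simp only: swap sum_distrib_left)
    finally show ?thesis
      by simp
  qed (simp add: wedge_def)
qed

lemma wedge_self_eq_0:
  assumes "homogeneous a f" "odd a"
  shows "wedge f f = 0"
proof -
  have "wedge f f = ext_scale ((-1) ^ (a * a)) (wedge f f)"
    by (rule wedge_commute[OF assms(1,1)])
  also have "(-1 :: complex) ^ (a * a) = -1"
    using assms(2) by simp
  finally have "wedge f f = - wedge f f"
    unfolding ext_scale_minus_one .
  then show ?thesis
    by (rule ext_eq_0_if_eq_uminus)
qed

lemma wedge_anticommute_odd:
  assumes "homogeneous a x" "homogeneous c y" "odd a" "odd c"
  shows "wedge x (wedge y f) = - wedge y (wedge x f)"
proof -
  have "(-1 :: complex) ^ (a * c) = -1"
    using assms(3,4) by simp
  then have "wedge x y = - wedge y x"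
    using wedge_commute[OF assms(1,2)] by (simp only: ext_scale_minus_one)
  then have "wedge (wedge x y) f = - wedge (wedge y x) f"
    by (simp only: wedge_uminus_left)
  then show ?thesis
    by (simp only: wedge_assoc)
qed

lemma wedge_wedge_self_eq_0:
  assumes "homogeneous 1 x"
  shows "wedge x (wedge x f) = 0"
  using wedge_anticommute_odd[OF assms assms odd_one odd_one] by (rule ext_eq_0_if_eq_uminus)

lemma mmul_apply: "mmul N X Y i j = (\<Sum>k\<in>{0..<N}. wedge (X i k) (Y k j))"
  by (simp add: mmul_def ext_sum_eq)

lemma mmul_assoc: "mmul N (mmul N X Y) Z = mmul N X (mmul N Y Z)"
proof (rule ext, rule ext)
  fix i j
  have "mmul N (mmul N X Y) Z i j
      = (\<Sum>k\<in>{0..<N}. \<Sum>l\<in>{0..<N}. wedge (X i l) (wedge (Y l k) (Z k j)))"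
    by (simp add: mmul_apply wedge_sum_left wedge_assoc)
  also have "\<dots> = (\<Sum>l\<in>{0..<N}. \<Sum>k\<in>{0..<N}. wedge (X i l) (wedge (Y l k) (Z k j)))"
    by (rule sum.swap)
  also have "\<dots> = mmul N X (mmul N Y Z) i j"
    by (simp add: mmul_apply wedge_sum_right)
  finally show "mmul N (mmul N X Y) Z i j = mmul N X (mmul N Y Z) i j" .
qed

lemma mmul_mid_right:
  assumes "j < N" "finitary (X i j)"
  shows "mmul N X mid i j = X i j"
proof -
  have "mmul N X mid i j = (\<Sum>k\<in>{0..<N}. if k = j then X i j else 0)"
    unfolding mmul_apply mid_def using assms(2)
    by (intro sum.cong) (auto simp: wedge_ext_one ext_zero_eq)
  also have "\<dots> = X i j"
    using assms(1) by simp
  finally show ?thesis .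
qed

lemma mmul_mid_left:
  assumes "i < N" "finitary (X i j)"
  shows "mmul N mid X i j = X i j"
proof -
  have "mmul N mid X i j = (\<Sum>k\<in>{0..<N}. if k = i then X i j else 0)"
    unfolding mmul_apply mid_def using assms(2)
    by (intro sum.cong) (auto simp: ext_one_wedge ext_zero_eq)
  also have "\<dots> = X i j"
    using assms(1) by simp
  finally show ?thesis .
qed

lemma mmul_mpow_eq_mpow_Suc:
  assumes "\<And>i j. finitary (X i j)" "i < N" "j < N"
  shows "mmul N X (mpow N X n) i j = mpow N X (Suc n) i j"
  using assms(2,3)
proof (induction n arbitrary: i j)
  case 0
  then show ?case
    using assms(1) by (simp add: mmul_mid_right mmul_mid_left)
next
  case (Suc n)
  have "mmul N X (mpow N X (Suc n)) i j = mmul N (mmul N X (mpow N X n)) X i j"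
    by (simp add: mmul_assoc)
  also have "\<dots> = mmul N (mpow N X (Suc n)) X i j"
    using Suc by (simp add: mmul_apply)
  finally show ?case
    by simp
qed

lemma homogeneous_mpow:
  assumes "\<And>i j. homogeneous 1 (X i j)"
  shows "homogeneous n (mpow N X n i j)"
proof (induction n arbitrary: i j)
  case 0
  show ?case
    using homogeneous_ext_one Ext.subspace_0[OF subspace_homogeneous]
    by (simp add: mid_def ext_zero_eq)
next
  case (Suc n)
  have "homogeneous (n + 1) (wedge (mpow N X n i k) (X k j))" for k
    using homogeneous_wedge[OF Suc.IH assms] .
  then show ?case
    unfolding mpow.simps mmul_apply
    by (intro Ext.subspace_sum[OF subspace_homogeneous, simplified]) simp
qed

text \<open>Moving the last factor of \<open>tr (X^n X)\<close> to the front costs the sign \<open>(-1)^n = -1\<close>, while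
  cyclicity of the trace says that nothing changes.\<close>

lemma mtrace_mpow_even_eq_0:
  assumes X: "\<And>i j. homogeneous 1 (X i j)" and "odd n"
  shows "mtrace N (mpow N X (Suc n)) = 0"
proof -
  have fin: "\<And>i j. finitary (X i j)"
    using X finitary_if_homogeneous by blast
  have "mtrace N (mpow N X (Suc n)) = (\<Sum>i\<in>{0..<N}. \<Sum>k\<in>{0..<N}. wedge (mpow N X n i k) (X k i))"
    by (simp add: mtrace_def ext_sum_eq mmul_apply)
  also have "\<dots> = (\<Sum>i\<in>{0..<N}. \<Sum>k\<in>{0..<N}. - wedge (X k i) (mpow N X n i k))"
    using wedge_commute[OF homogeneous_mpow[OF X] X] \<open>odd n\<close>
    by (simp add: ext_scale_minus_one)
  also have "\<dots> = - (\<Sum>k\<in>{0..<N}. mmul N X (mpow N X n) k k)"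
    by (subst sum.swap) (simp add: sum_negf mmul_apply)
  also have "\<dots> = - mtrace N (mpow N X (Suc n))"
    using mmul_mpow_eq_mpow_Suc[OF fin] by (simp add: mtrace_def ext_sum_eq)
  finally show ?thesis
    by (rule ext_eq_0_if_eq_uminus)
qed

lemma mmul_add_diag_right:
  assumes "j < N"
  shows "mmul N X (\<lambda>k l. Y k l + (if k = l then c else 0)) i j = mmul N X Y i j + wedge (X i j) c"
proof -
  have "mmul N X (\<lambda>k l. Y k l + (if k = l then c else 0)) i j
      = (\<Sum>k\<in>{0..<N}. wedge (X i k) (Y k j) + (if k = j then wedge (X i j) c else 0))"
    by (auto simp: mmul_apply wedge_add_right intro!: sum.cong)
  also have "\<dots> = mmul N X Y i j + wedge (X i j) c"
    using assms by (simp add: sum.distrib mmul_apply)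
  finally show ?thesis .
qed

lemma mmul_wedge_left: "mmul N (\<lambda>i k. wedge c (X i k)) Y i j = wedge c (mmul N X Y i j)"
  by (simp add: mmul_apply wedge_assoc wedge_sum_right)

section \<open>The trace identity\<close>

definition diag_part :: "nat \<Rightarrow> ext" where
  "diag_part N = ext_scale (1 / complex_of_real (sqrt (real N))) (chi N)"

lemma Psi_eq_Amat_plus_diag_part: "Psi i j = Amat N i j + (if i = j then diag_part N else 0)"
  by (simp add: Amat_def diag_part_def ext_diff_eq)

lemma homogeneous_chi: "homogeneous 1 (chi N)"
  unfolding chi_def ext_sum_eq
  by (intro Ext.subspace_scale[OF subspace_homogeneous, simplified]
      Ext.subspace_sum[OF subspace_homogeneous, simplified] homogeneous_Psi)

lemma homogeneous_diag_part: "homogeneous 1 (diag_part N)"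
  unfolding diag_part_def
  by (intro Ext.subspace_scale[OF subspace_homogeneous, simplified] homogeneous_chi)

lemma homogeneous_Amat: "homogeneous 1 (Amat N i j)"
  unfolding Amat_def ext_diff_eq diag_part_def[symmetric]
  using Ext.subspace_diff[OF subspace_homogeneous] homogeneous_Psi homogeneous_diag_part
  by simp

text \<open>In \<open>(A + c 1)^n\<close> the terms with two factors \<open>c\<close> vanish, and the \<open>n\<close> terms linear in \<open>c\<close> are
  \<open>\<plusminus> c \<and> A^(n-1)\<close> with alternating signs, so they cancel in pairs except for one when \<open>n\<close> is odd.\<close>

lemma mpow_Psi:
  assumes "i < N" "j < N"
  shows "mpow N Psi n i j = mpow N (Amat N) n i j
    + (if odd n then wedge (diag_part N) (mpow N (Amat N) (n - 1) i j) else 0)"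
  using assms
proof (induction n arbitrary: i j)
  case 0
  then show ?case by simp
next
  case (Suc n)
  define c where "c = diag_part N"
  define B where "B = mpow N (Amat N)"
  define E where "E = (\<lambda>i k. if odd n then wedge c (B (n - 1) i k) else 0)"
  have c: "homogeneous 1 c"
    unfolding c_def by (rule homogeneous_diag_part)
  have B: "homogeneous m (B m i j)" for m i j
    unfolding B_def by (intro homogeneous_mpow homogeneous_Amat)
  have IH: "mpow N Psi n i k = B n i k + E i k" if "k < N" for k
    unfolding B_def E_def c_def by (rule Suc.IH[OF Suc.prems(1) that])
  have Psi: "Psi = (\<lambda>k l. Amat N k l + (if k = l then c else 0))"
    by (simp add: c_def fun_eq_iff Psi_eq_Amat_plus_diag_part[of _ _ N])
  have "mpow N Psi (Suc n) i j = mmul N (mpow N Psi n) Psi i j"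
    by simp
  also have "\<dots> = mmul N (mpow N Psi n) (Amat N) i j + wedge (mpow N Psi n i j) c"
    using mmul_add_diag_right[OF Suc.prems(2), of "mpow N Psi n" "Amat N" c i]
    unfolding Psi[symmetric] .
  also have "mmul N (mpow N Psi n) (Amat N) i j = B (Suc n) i j + mmul N E (Amat N) i j"
    using IH by (simp add: mmul_apply B_def wedge_add_left sum.distrib)
  also have "mmul N E (Amat N) i j = (if odd n then wedge c (B n i j) else 0)"
  proof (cases "odd n")
    case True
    then obtain m where "n = Suc m"
      by (cases n) auto
    then show ?thesis
      using True by (simp add: E_def B_def mmul_wedge_left)
  qed (simp add: E_def mmul_apply)
  also have "wedge (mpow N Psi n i j) c = ext_scale ((-1) ^ n) (wedge c (B n i j))"
  proof -
    have "wedge (E i j) c = 0"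
      using wedge_commute[OF B c, of "n - 1"] c
      by (simp add: E_def wedge_assoc wedge_scale_right wedge_wedge_self_eq_0)
    then show ?thesis
      using IH[OF Suc.prems(2)] wedge_commute[OF B c] by (simp add: wedge_add_left)
  qed
  finally show ?case
    by (cases "odd n") (auto simp: B_def c_def ext_scale_minus_one)
qed

theorem TrPsi_eq_TrA:
  assumes "p \<ge> 3" "odd p"
  shows "TrPsi N p = TrA N p"
proof -
  have n: "p - 1 = Suc (p - 2)" "odd (p - 2)"
    using assms by presburger+
  have "TrPsi N p = TrA N p + wedge (diag_part N) (mtrace N (mpow N (Amat N) (p - 1)))"
    using assms(2)
    by (simp add: TrPsi_def TrA_def mtrace_def ext_sum_eq mpow_Psi sum.distrib wedge_sum_right)
  also have "mtrace N (mpow N (Amat N) (p - 1)) = 0"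
    unfolding n(1) by (rule mtrace_mpow_even_eq_0[OF homogeneous_Amat n(2)])
  finally show ?thesis
    by (simp only: wedge_zero_right add_0_right)
qed

lemma subspace_Lam: "Ext.subspace (Lam N)"
  unfolding Ext.subspace_def
proof (intro conjI ballI allI)
  fix f g assume f: "f \<in> Lam N" and g: "g \<in> Lam N"
  show "f + g \<in> Lam N"
    unfolding Lam_def
  proof (intro CollectI allI impI)
    fix S assume "(f + g) S \<noteq> 0"
    then have "f S \<noteq> 0 \<or> g S \<noteq> 0"
      by auto
    then show "S \<subseteq> gens N"
      using f g by (auto simp: Lam_def)
  qed
qed (simp_all add: Lam_def)

lemma Lam_deg_iff: "f \<in> Lam_deg N R \<longleftrightarrow> f \<in> Lam N \<and> homogeneous R f"
proof -
  have "finite S" if "S \<subseteq> gens N" for S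
    using that finite_subset by (auto simp: gens_def)
  then show ?thesis
    by (auto simp: Lam_deg_def homogeneous_def Lam_def)
qed

lemma subspace_Lam_deg: "Ext.subspace (Lam_deg N R)"
proof -
  have "Lam_deg N R = Lam N \<inter> {f. homogeneous R f}"
    using Lam_deg_iff by blast
  then show ?thesis
    using Ext.subspace_inter[OF subspace_Lam subspace_homogeneous] by simp
qed

lemma wedge_in_Lam:
  assumes "f \<in> Lam N" "g \<in> Lam N"
  shows "wedge f g \<in> Lam N"
  unfolding Lam_def
proof (intro CollectI allI impI)
  fix U assume "wedge f g U \<noteq> 0"
  then have "(\<Sum>S\<in>Pow U. wsign S (U - S) * f S * g (U - S)) \<noteq> 0"
    by (auto simp: wedge_def split: if_splits)
  then obtain S where S: "S \<subseteq> U" "f S \<noteq> 0" "g (U - S) \<noteq> 0"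
    by (elim sum.not_neutral_contains_not_neutral) auto
  then have "S \<subseteq> gens N" "U - S \<subseteq> gens N"
    using assms by (auto simp: Lam_def)
  then show "U \<subseteq> gens N"
    by blast
qed

lemma wedge_in_Lam_deg:
  assumes "f \<in> Lam_deg N a" "g \<in> Lam_deg N b"
  shows "wedge f g \<in> Lam_deg N (a + b)"
  using assms wedge_in_Lam homogeneous_wedge by (simp add: Lam_deg_iff)

lemma ext_one_in_Lam_deg: "ext_one \<in> Lam_deg N 0"
  by (auto simp: Lam_deg_def Lam_def ext_one_def)

lemma Psi_in_Lam_deg: "i < N \<Longrightarrow> j < N \<Longrightarrow> Psi i j \<in> Lam_deg N 1"
  by (auto simp: Lam_deg_def Lam_def Psi_def gens_def)

lemma chi_in_Lam_deg: "chi N \<in> Lam_deg N 1"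
proof -
  have "(\<Sum>i\<in>{0..<N}. Psi i i) \<in> Lam_deg N 1"
    using Psi_in_Lam_deg by (intro Ext.subspace_sum[OF subspace_Lam_deg]) simp
  then show ?thesis
    unfolding chi_def ext_sum_eq by (rule Ext.subspace_scale[OF subspace_Lam_deg])
qed

lemma Lam_deg_one_iff: "x \<in> Lam_deg N 1 \<longleftrightarrow> (\<forall>S. x S \<noteq> 0 \<longrightarrow> (\<exists>g\<in>gens N. S = {g}))"
proof
  assume x: "x \<in> Lam_deg N 1"
  show "\<forall>S. x S \<noteq> 0 \<longrightarrow> (\<exists>g\<in>gens N. S = {g})"
  proof (intro allI impI)
    fix S assume "x S \<noteq> 0"
    then have "S \<subseteq> gens N" "card S = 1"
      using x by (auto simp: Lam_deg_def Lam_def)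
    then show "\<exists>g\<in>gens N. S = {g}"
      by (auto simp: card_1_singleton_iff)
  qed
qed (auto simp: Lam_deg_def Lam_def)

lemma Lam_deg_one_expand:
  assumes "x \<in> Lam_deg N 1"
  shows "x = (\<Sum>g\<in>gens N. ext_scale (x {g}) (Psi (fst g) (snd g)))"
proof (rule ext)
  fix U
  have "(\<Sum>g\<in>gens N. ext_scale (x {g}) (Psi (fst g) (snd g))) U = (\<Sum>g\<in>gens N. if U = {g} then x U else 0)"
    unfolding sum_fun_apply by (intro sum.cong) (auto simp: Psi_def)
  also have "\<dots> = x U"
  proof (cases "\<exists>g\<in>gens N. U = {g}")
    case True
    then obtain g where g: "g \<in> gens N" "U = {g}" by blast
    have "(\<Sum>h\<in>gens N. if U = {h} then x U else 0) = (\<Sum>h\<in>gens N. if h = g then x U else 0)"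
      using g by (intro sum.cong) auto
    also have "\<dots> = x U"
      using g by (simp add: gens_def)
    finally show ?thesis .
  next
    case False
    then show ?thesis
      using assms unfolding Lam_deg_one_iff by auto
  qed
  finally show "x U = (\<Sum>g\<in>gens N. ext_scale (x {g}) (Psi (fst g) (snd g))) U"
    by simp
qed

definition lin_trace :: "nat \<Rightarrow> ext \<Rightarrow> complex" where
  "lin_trace N x = (\<Sum>i<N. x {(i, i)})"

text \<open>On degree-one elements, \<open>chi_coeff\<close> is the component along \<open>chi\<close> in \<open>\<bbbC> chi \<oplus> sl_N\<close>.\<close>

definition chi_coeff :: "nat \<Rightarrow> ext \<Rightarrow> complex" where
  "chi_coeff N x = lin_trace N x / complex_of_real (sqrt (real N))"

lemma sl_lin_eq: "sl_lin N = {x \<in> Lam_deg N 1. lin_trace N x = 0}"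
  unfolding sl_lin_def Lam_deg_one_iff lin_trace_def by auto

lemma lin_trace_zero [simp]: "lin_trace N 0 = 0"
  by (simp add: lin_trace_def)

lemma lin_trace_diff: "lin_trace N (x - y) = lin_trace N x - lin_trace N y"
  by (simp add: lin_trace_def sum_subtractf)

lemma lin_trace_scale: "lin_trace N (ext_scale c x) = c * lin_trace N x"
  by (simp add: lin_trace_def sum_distrib_left)

lemma lin_trace_Psi: "lin_trace N (Psi i j) = (if i = j \<and> i < N then 1 else 0)"
proof -
  have "lin_trace N (Psi i j) = (\<Sum>k<N. if k = i \<and> i = j then 1 else 0)"
    unfolding lin_trace_def by (intro sum.cong) (auto simp: Psi_def)
  then show ?thesis
    by (cases "i = j") simp_all
qed

lemma lin_trace_chi:
  assumes "N > 0"
  shows "lin_trace N (chi N) = complex_of_real (sqrt (real N))"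
proof -
  have "lin_trace N (chi N) = (1 / complex_of_real (sqrt (real N))) * (\<Sum>i<N. \<Sum>k\<in>{0..<N}. Psi k k {(i, i)})"
    by (simp add: lin_trace_def chi_def ext_sum_def sum_distrib_left)
  also have "(\<Sum>i<N. \<Sum>k\<in>{0..<N}. Psi k k {(i, i)}) = (\<Sum>i<N. 1 :: complex)"
  proof (rule sum.cong)
    fix i assume "i \<in> {..<N}"
    then have "(\<Sum>k\<in>{0..<N}. Psi k k {(i, i)}) = (\<Sum>k\<in>{0..<N}. if k = i then 1 else 0)"
      by (intro sum.cong) (auto simp: Psi_def)
    also have "\<dots> = 1"
      using \<open>i \<in> {..<N}\<close> by simp
    finally show "(\<Sum>k\<in>{0..<N}. Psi k k {(i, i)}) = 1" .
  qed simp
  also have "(1 / complex_of_real (sqrt (real N))) * (\<Sum>i<N. 1 :: complex)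
      = complex_of_real (real N / sqrt (real N))"
    by simp
  also have "real N / sqrt (real N) = sqrt (real N)"
    using assms by (metis real_div_sqrt of_nat_0_le_iff)
  finally show ?thesis .
qed

lemma chi_coeff_chi: "N > 0 \<Longrightarrow> chi_coeff N (chi N) = 1"
  by (simp add: chi_coeff_def lin_trace_chi)

lemma chi_coeff_sl_lin: "x \<in> sl_lin N \<Longrightarrow> chi_coeff N x = 0"
  by (simp add: sl_lin_eq chi_coeff_def)

lemma traceless_part_in_sl_lin:
  assumes "N > 0" "x \<in> Lam_deg N 1"
  shows "x - ext_scale (chi_coeff N x) (chi N) \<in> sl_lin N"
proof -
  have "x - ext_scale (chi_coeff N x) (chi N) \<in> Lam_deg N 1"
    using assms(2) chi_in_Lam_deg
    by (intro Ext.subspace_diff[OF subspace_Lam_deg] Ext.subspace_scale[OF subspace_Lam_deg])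
  moreover have "lin_trace N (x - ext_scale (chi_coeff N x) (chi N)) = 0"
    using assms(1) by (simp add: lin_trace_diff lin_trace_scale lin_trace_chi chi_coeff_def)
  ultimately show ?thesis
    by (simp add: sl_lin_eq)
qed

lemma Amat_in_sl_lin:
  assumes "N > 0" "i < N" "j < N"
  shows "Amat N i j \<in> sl_lin N"
proof -
  have c: "diag_part N \<in> Lam_deg N 1"
    unfolding diag_part_def by (rule Ext.subspace_scale[OF subspace_Lam_deg chi_in_Lam_deg])
  have "Amat N i j = Psi i j - (if i = j then diag_part N else 0)"
    by (simp add: Psi_eq_Amat_plus_diag_part[of i j N])
  moreover have "Psi i j - (if i = j then diag_part N else 0) \<in> Lam_deg N 1"
    using assms(2,3) c Psi_in_Lam_deg Ext.subspace_0[OF subspace_Lam_deg]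
    by (intro Ext.subspace_diff[OF subspace_Lam_deg]) simp_all
  moreover have "lin_trace N (Psi i j - (if i = j then diag_part N else 0)) = 0"
    using assms
    by (cases "i = j") (simp_all add: lin_trace_diff lin_trace_Psi diag_part_def lin_trace_scale lin_trace_chi)
  ultimately show ?thesis
    by (simp add: sl_lin_eq)
qed

lemma sl_deg_eq_span: "sl_deg N R = Ext.span {wedge_list fs | fs. length fs = R \<and> set fs \<subseteq> sl_lin N}"
  by (simp add: sl_deg_def)

lemma subspace_sl_deg: "Ext.subspace (sl_deg N R)"
  by (simp add: sl_deg_eq_span)

lemma wedge_list_in_Lam_deg: "set fs \<subseteq> Lam_deg N 1 \<Longrightarrow> wedge_list fs \<in> Lam_deg N (length fs)"
  by (induction fs) (auto simp: ext_one_in_Lam_deg dest: wedge_in_Lam_deg)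

lemma sl_deg_subset_Lam_deg: "sl_deg N R \<subseteq> Lam_deg N R"
  unfolding sl_deg_eq_span
  by (rule Ext.span_minimal) (auto simp: subspace_Lam_deg sl_lin_eq intro!: wedge_list_in_Lam_deg)

lemma finitary_if_sl_deg:
  assumes "a \<in> sl_deg N R"
  shows "finitary a"
proof -
  have "homogeneous R a"
    using assms sl_deg_subset_Lam_deg Lam_deg_iff by blast
  then show ?thesis
    by (rule finitary_if_homogeneous)
qed

lemma ext_one_in_sl_deg: "ext_one \<in> sl_deg N 0"
  unfolding sl_deg_eq_span by (rule Ext.span_base) (auto intro!: exI[of _ "[]"])

lemma wedge_sl_lin_in_sl_deg:
  assumes "w \<in> sl_lin N" "a \<in> sl_deg N R"
  shows "wedge w a \<in> sl_deg N (Suc R)"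
proof -
  let ?gens = "\<lambda>R. {wedge_list fs | fs. length fs = R \<and> set fs \<subseteq> sl_lin N}"
  have "wedge w ` sl_deg N R = Ext.span (wedge w ` ?gens R)"
    unfolding sl_deg_eq_span by (rule module_hom.span_image[OF module_hom_wedge_right, symmetric])
  also have "\<dots> \<subseteq> Ext.span (?gens (Suc R))"
  proof (rule Ext.span_mono, rule image_subsetI)
    fix g assume "g \<in> ?gens R"
    then obtain fs where "g = wedge_list fs" "length fs = R" "set fs \<subseteq> sl_lin N"
      by blast
    then show "wedge w g \<in> ?gens (Suc R)"
      using assms(1) by (intro CollectI exI[of _ "w # fs"]) auto
  qed
  finally show ?thesis
    using assms(2) by (auto simp: sl_deg_eq_span)
qed

lemma sl_lin_subset_sl_deg: "sl_lin N \<subseteq> sl_deg N 1"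
proof
  fix w assume w: "w \<in> sl_lin N"
  have "finitary w"
    using w finitary_if_homogeneous by (auto simp: sl_lin_eq Lam_deg_iff)
  then show "w \<in> sl_deg N 1"
    using wedge_sl_lin_in_sl_deg[OF w ext_one_in_sl_deg] by (simp add: wedge_ext_one)
qed

lemma wedge_in_sl_deg:
  assumes a: "a \<in> sl_deg N m" and g: "g \<in> sl_deg N n"
  shows "wedge a g \<in> sl_deg N (m + n)"
proof -
  have products: "wedge (wedge_list fs) g \<in> sl_deg N (length fs + n)" if "set fs \<subseteq> sl_lin N" for fs
    using that
  proof (induction fs)
    case Nil
    then show ?case
      using g finitary_if_sl_deg by (simp add: ext_one_wedge)
  next
    case (Cons w fs)
    then show ?case
      using wedge_sl_lin_in_sl_deg[of w N "wedge (wedge_list fs) g"] by (simp add: wedge_assoc)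
  qed
  interpret right: module_hom ext_scale ext_scale "\<lambda>a. wedge a g"
    by (rule module_hom_wedge_left)
  have "sl_deg N m \<subseteq> (\<lambda>a. wedge a g) -` sl_deg N (m + n)"
    unfolding sl_deg_eq_span[of N m]
    by (rule Ext.span_minimal)
      (auto simp: products right.subspace_vimage subspace_sl_deg)
  then show ?thesis
    using a by blast
qed

lemma mpow_Amat_in_sl_deg:
  assumes "N > 0" "i < N" "j < N"
  shows "mpow N (Amat N) n i j \<in> sl_deg N n"
  using assms(2,3)
proof (induction n arbitrary: i j)
  case 0
  then show ?case
    using ext_one_in_sl_deg Ext.subspace_0[OF subspace_sl_deg] by (simp add: mid_def ext_zero_eq)
next
  case (Suc n)
  have "wedge (mpow N (Amat N) n i k) (Amat N k j) \<in> sl_deg N (n + 1)" if "k < N" for k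
    using Suc that assms(1) Amat_in_sl_lin sl_lin_subset_sl_deg by (blast intro: wedge_in_sl_deg)
  then show ?case
    unfolding mpow.simps mmul_apply by (intro Ext.subspace_sum[OF subspace_sl_deg]) simp
qed

lemma TrA_in_sl_deg: "N > 0 \<Longrightarrow> TrA N p \<in> sl_deg N p"
  unfolding TrA_def mtrace_def ext_sum_eq
  by (intro Ext.subspace_sum[OF subspace_sl_deg] mpow_Amat_in_sl_deg) auto

section \<open>Contraction with the dual of chi\<close>

text \<open>\<open>contract d\<close> is the left derivative with respect to the generator \<open>d\<close>: it moves \<open>d\<close> to the front
  of a monomial and deletes it.\<close>

definition contract :: "gen \<Rightarrow> ext \<Rightarrow> ext" where
  "contract d f = (\<lambda>U. if d \<in> U then 0 else wsign {d} U * f (insert d U))"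

text \<open>The interior derivative dual to \<open>chi\<close>: it is a graded derivation that sends \<open>chi\<close> to \<open>1\<close>
  and annihilates the traceless generators, so it kills the traceless subalgebra.\<close>

definition contract_chi :: "nat \<Rightarrow> ext \<Rightarrow> ext" where
  "contract_chi N f = (\<Sum>i<N. ext_scale (1 / complex_of_real (sqrt (real N))) (contract (i, i) f))"

lemma module_hom_contract: "module_hom ext_scale ext_scale (contract d)"
  by unfold_locales (auto simp: contract_def fun_eq_iff algebra_simps)

lemma module_hom_contract_chi: "module_hom ext_scale ext_scale (contract_chi N)"
proof -
  interpret contract: module_hom ext_scale ext_scale "contract d" for d
    by (rule module_hom_contract)
  show ?thesis
    by unfold_locales (auto simp: contract_chi_def contract.add contract.scale sum.distrib
        Ext.scale_sum_right Ext.scale_right_distrib Ext.scale_scale mult.commute)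
qed

lemma wsign_insert_swap:
  assumes "finite T" "d \<notin> T" "h \<notin> T" "d \<noteq> h"
  shows "wsign {d} (insert h T) * wsign {h} (insert d T) = - (wsign {h} T * wsign {d} T)"
proof -
  have "wsign {d} ({h} \<union> T) = wsign {d} {h} * wsign {d} T"
    and "wsign {h} ({d} \<union> T) = wsign {h} {d} * wsign {h} T"
    using assms by (intro wsign_Un_right; auto)+
  moreover have "wsign {d} {h} * wsign {h} {d} = -1"
    using wsign_swap[of "{d}" "{h}"] assms(4) by simp
  ultimately show ?thesis
    by (simp add: algebra_simps)
qed

lemma wedge_Psi_apply:
  "wedge (Psi i j) f U =
    (if finite U \<and> (i, j) \<in> U then wsign {(i, j)} (U - {(i, j)}) * f (U - {(i, j)}) else 0)"
proof (cases "finite U")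
  case True
  have "wedge (Psi i j) f U = (\<Sum>S\<in>Pow U. wsign S (U - S) * Psi i j S * f (U - S))"
    using True by (simp add: wedge_def)
  also have "\<dots> = (\<Sum>S\<in>Pow U. if S = {(i, j)} then wsign {(i, j)} (U - {(i, j)}) * f (U - {(i, j)}) else 0)"
    by (rule sum.cong) (auto simp: Psi_def)
  also have "\<dots> = (if (i, j) \<in> U then wsign {(i, j)} (U - {(i, j)}) * f (U - {(i, j)}) else 0)"
    using True by (subst sum.delta) auto
  finally show ?thesis
    using True by simp
qed (simp add: wedge_def)

lemma contract_wedge_Psi_apply_other:
  assumes fin: "finite U" and d: "d \<noteq> (i, j)" "d \<notin> U" "(i, j) \<in> U"
  shows "contract d (wedge (Psi i j) f) U = - wedge (Psi i j) (contract d f) U"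
proof -
  define h where "h = (i, j)"
  define T where "T = U - {h}"
  have U: "U = insert h T" "h \<notin> T" "d \<notin> T" "finite T"
    using d fin by (auto simp: T_def h_def)
  have "insert d U - {h} = insert d T"
    using U d by (auto simp: h_def)
  then have "contract d (wedge (Psi i j) f) U = wsign {d} U * (wsign {h} (insert d T) * f (insert d T))"
    using fin d by (simp add: contract_def wedge_Psi_apply h_def[symmetric])
  also have "\<dots> = - (wsign {h} T * (wsign {d} T * f (insert d T)))"
    using wsign_insert_swap[OF U(4,3,2)] d(1) U(1) by (simp add: algebra_simps h_def)
  also have "\<dots> = - wedge (Psi i j) (contract d f) U"
    using fin d U(3) by (simp add: contract_def wedge_Psi_apply h_def[symmetric] T_def[symmetric])
  finally show ?thesis .
qed

lemma contract_wedge_Psi: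
  assumes f: "finitary f"
  shows "contract d (wedge (Psi i j) f) = (if d = (i, j) then f else 0) - wedge (Psi i j) (contract d f)"
proof (rule ext)
  fix U :: "gen set"
  show "contract d (wedge (Psi i j) f) U = ((if d = (i, j) then f else 0) - wedge (Psi i j) (contract d f)) U"
  proof (cases "finite U")
    case False
    then show ?thesis
      using f by (auto simp: contract_def wedge_Psi_apply finitary_def)
  next
    case fin: True
    consider "d = (i, j)" | "d \<noteq> (i, j)" "d \<notin> U" "(i, j) \<in> U" | "d \<noteq> (i, j)" "d \<in> U \<or> (i, j) \<notin> U"
      by blast
    then show ?thesis
    proof cases
      case 1
      have "insert d (U - {d}) = U" if "d \<in> U"
        using that by auto
      moreover have "insert d U - {d} = U" if "d \<notin> U"
        using that by auto
      ultimately show ?thesis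
        using fin 1 by (simp add: contract_def wedge_Psi_apply mult.assoc[symmetric])
    next
      case 2
      then show ?thesis
        using contract_wedge_Psi_apply_other[OF fin] by simp
    next
      case 3
      then show ?thesis
        using fin by (auto simp: contract_def wedge_Psi_apply)
    qed
  qed
qed

lemma contract_wedge_Lam_deg_one:
  assumes x: "x \<in> Lam_deg N 1" and f: "finitary f" and d: "d \<in> gens N"
  shows "contract d (wedge x f) = ext_scale (x {d}) f - wedge x (contract d f)"
proof -
  interpret contract: module_hom ext_scale ext_scale "contract d"
    by (rule module_hom_contract)
  let ?Psi = "\<lambda>g. Psi (fst g) (snd g)"
  have "contract d (wedge x f) = (\<Sum>g\<in>gens N. ext_scale (x {g}) (contract d (wedge (?Psi g) f)))"
    by (subst Lam_deg_one_expand[OF x]) (simp add: wedge_sum_left wedge_scale_left contract.sum contract.scale)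
  also have "\<dots> = (\<Sum>g\<in>gens N. ext_scale (x {g}) (if d = g then f else 0))
      - (\<Sum>g\<in>gens N. ext_scale (x {g}) (wedge (?Psi g) (contract d f)))"
    by (simp add: contract_wedge_Psi[OF f] Ext.scale_right_diff_distrib sum_subtractf)
  also have "(\<Sum>g\<in>gens N. ext_scale (x {g}) (if d = g then f else 0)) = ext_scale (x {d}) f"
  proof -
    have "(\<Sum>g\<in>gens N. ext_scale (x {g}) (if d = g then f else 0))
        = (\<Sum>g\<in>gens N. if g = d then ext_scale (x {d}) f else 0)"
      by (intro sum.cong) auto
    also have "\<dots> = ext_scale (x {d}) f"
      using d by (simp add: gens_def)
    finally show ?thesis .
  qed
  also have "(\<Sum>g\<in>gens N. ext_scale (x {g}) (wedge (?Psi g) (contract d f))) = wedge x (contract d f)"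
    by (subst (2) Lam_deg_one_expand[OF x]) (simp add: wedge_sum_left wedge_scale_left)
  finally show ?thesis .
qed

lemma contract_chi_wedge_Lam_deg_one:
  assumes x: "x \<in> Lam_deg N 1" and f: "finitary f"
  shows "contract_chi N (wedge x f) = ext_scale (chi_coeff N x) f - wedge x (contract_chi N f)"
proof -
  define k where "k = 1 / complex_of_real (sqrt (real N))"
  have "contract_chi N (wedge x f)
      = (\<Sum>i<N. ext_scale k (ext_scale (x {(i, i)}) f - wedge x (contract (i, i) f)))"
    unfolding contract_chi_def k_def
    by (intro sum.cong refl) (simp add: contract_wedge_Lam_deg_one[OF x f] gens_def)
  also have "\<dots> = (\<Sum>i<N. ext_scale (k * x {(i, i)}) f) - wedge x (contract_chi N f)"
    by (simp add: contract_chi_def k_def Ext.scale_right_diff_distrib sum_subtractf wedge_sum_right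
        wedge_scale_right)
  also have "(\<Sum>i<N. ext_scale (k * x {(i, i)}) f) = ext_scale (chi_coeff N x) f"
    by (simp add: Ext.scale_sum_left[symmetric] chi_coeff_def lin_trace_def k_def sum_distrib_left
        sum_divide_distrib)
  finally show ?thesis .
qed

lemma contract_chi_ext_one: "contract_chi N ext_one = 0"
proof (rule ext)
  fix U
  have "contract_chi N ext_one U = (\<Sum>i<N. (1 / complex_of_real (sqrt (real N))) * contract (i, i) ext_one U)"
    by (simp add: contract_chi_def sum_fun_apply)
  also have "\<dots> = 0"
    by (intro sum.neutral) (simp add: contract_def ext_one_def)
  finally show "contract_chi N ext_one U = 0 U"
    by simp
qed

lemma contract_chi_sl_deg:
  assumes "a \<in> sl_deg N R"
  shows "contract_chi N a = 0"
proof -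
  interpret contract_chi: module_hom ext_scale ext_scale "contract_chi N"
    by (rule module_hom_contract_chi)
  have "contract_chi N (wedge_list fs) = 0" if "set fs \<subseteq> sl_lin N" for fs
    using that
  proof (induction fs)
    case Nil
    then show ?case by (simp add: contract_chi_ext_one)
  next
    case (Cons w fs)
    then have w: "w \<in> sl_lin N" "w \<in> Lam_deg N 1"
      by (simp_all add: sl_lin_eq)
    have fin: "finitary (wedge_list fs)"
      using finitary_if_homogeneous[OF homogeneous_ext_one] by (cases fs) simp_all
    have IH: "contract_chi N (wedge_list fs) = 0"
      by (rule Cons.IH) (use Cons.prems in simp)
    show ?case
      by (simp only: wedge_list.simps contract_chi_wedge_Lam_deg_one[OF w(2) fin] chi_coeff_sl_lin[OF w(1)]
          IH Ext.scale_zero_left wedge_zero_right diff_zero)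
  qed
  then have "sl_deg N R \<subseteq> {a. contract_chi N a = 0}"
    unfolding sl_deg_eq_span by (intro Ext.span_minimal) (auto simp: contract_chi.subspace_kernel)
  then show ?thesis
    using assms by blast
qed

lemma contract_chi_wedge_chi:
  assumes "N > 0" "finitary b" "contract_chi N b = 0"
  shows "contract_chi N (wedge (chi N) b) = b"
  using contract_chi_wedge_Lam_deg_one[OF chi_in_Lam_deg assms(2), of N] assms(3) chi_coeff_chi[OF assms(1)]
  by (simp add: Ext.scale_one)

section \<open>Splitting off chi\<close>

definition shift :: "(nat \<Rightarrow> ext set) \<Rightarrow> nat \<Rightarrow> ext set" where
  "shift C R = (if R = 0 then {0} else C (R - 1))"

definition chi_sum :: "nat \<Rightarrow> ext set \<Rightarrow> ext set \<Rightarrow> ext set" where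
  "chi_sum N X Y = {a + wedge (chi N) b | a b. a \<in> X \<and> b \<in> Y}"

lemma subspace_shift: "(\<And>m. Ext.subspace (C m)) \<Longrightarrow> Ext.subspace (shift C R)"
  by (simp add: shift_def)

lemma subspace_shift_sl_deg: "Ext.subspace (shift (sl_deg N) R)"
  by (rule subspace_shift[of "sl_deg N", OF subspace_sl_deg])

lemma shift_sl_deg_subset_Lam_deg: "shift (sl_deg N) R \<subseteq> Lam_deg N (R - 1)"
  using sl_deg_subset_Lam_deg Ext.subspace_0[OF subspace_Lam_deg] by (auto simp: shift_def)

lemma finitary_if_shift_sl_deg: "b \<in> shift (sl_deg N) R \<Longrightarrow> finitary b"
  using finitary_if_sl_deg by (auto simp: shift_def finitary_def split: if_splits)

lemma contract_chi_shift_sl_deg: "b \<in> shift (sl_deg N) R \<Longrightarrow> contract_chi N b = 0"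
  using contract_chi_sl_deg module_hom.zero[OF module_hom_contract_chi]
  by (auto simp: shift_def split: if_splits)

lemma wedge_chi_in_Lam_deg:
  assumes "b \<in> shift (sl_deg N) R"
  shows "wedge (chi N) b \<in> Lam_deg N R"
proof (cases "R = 0")
  case True
  then show ?thesis
    using assms Ext.subspace_0[OF subspace_Lam_deg] by (simp add: shift_def)
next
  case False
  then have "b \<in> Lam_deg N (R - 1)"
    using assms sl_deg_subset_Lam_deg by (auto simp: shift_def)
  then show ?thesis
    using wedge_in_Lam_deg[OF chi_in_Lam_deg] False by fastforce
qed

lemma contract_chi_chi_sum:
  assumes "N > 0" "a \<in> sl_deg N R" "b \<in> shift (sl_deg N) R"
  shows "contract_chi N (a + wedge (chi N) b) = b"
  using contract_chi_sl_deg[OF assms(2)] contract_chi_wedge_chi[OF assms(1)]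
    finitary_if_shift_sl_deg[OF assms(3)] contract_chi_shift_sl_deg[OF assms(3)]
  by (simp add: module_hom.add[OF module_hom_contract_chi])

lemma chi_sum_unique:
  assumes "N > 0" "a \<in> sl_deg N R" "a' \<in> sl_deg N R" "b \<in> shift (sl_deg N) R" "b' \<in> shift (sl_deg N) R"
    and eq: "a + wedge (chi N) b = a' + wedge (chi N) b'"
  shows "a = a' \<and> b = b'"
proof -
  have "b = b'"
    using contract_chi_chi_sum[OF assms(1,2,4)] contract_chi_chi_sum[OF assms(1,3,5)] eq by simp
  then show ?thesis
    using eq by simp
qed

lemma chi_sum_eq_sums: "chi_sum N X Y = {x + y | x y. x \<in> X \<and> y \<in> wedge (chi N) ` Y}"
  by (auto simp: chi_sum_def)

lemma subspace_chi_sum: "Ext.subspace X \<Longrightarrow> Ext.subspace Y \<Longrightarrow> Ext.subspace (chi_sum N X Y)"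
  unfolding chi_sum_eq_sums
  by (intro Ext.subspace_sums module_hom.subspace_image[OF module_hom_wedge_right])

text \<open>Multiplying \<open>a + chi \<and> b\<close> by \<open>x = w + l chi\<close> with \<open>w\<close> traceless gives
  \<open>w \<and> a + chi \<and> (l a - w \<and> b)\<close>, because \<open>chi \<and> chi = 0\<close> and \<open>w\<close> anticommutes with \<open>chi\<close>.\<close>

lemma wedge_Lam_deg_one_chi_sum:
  assumes N: "N > 0" and x: "x \<in> Lam_deg N 1"
    and g: "g \<in> chi_sum N (sl_deg N R) (shift (sl_deg N) R)"
  shows "wedge x g \<in> chi_sum N (sl_deg N (Suc R)) (shift (sl_deg N) (Suc R))"
proof -
  obtain a b where g_eq: "g = a + wedge (chi N) b" and a: "a \<in> sl_deg N R" and b: "b \<in> shift (sl_deg N) R"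
    using g by (auto simp: chi_sum_def)
  define l where "l = chi_coeff N x"
  define w where "w = x - ext_scale l (chi N)"
  have w: "w \<in> sl_lin N"
    unfolding w_def l_def by (rule traceless_part_in_sl_lin[OF N x])
  have x_eq: "x = w + ext_scale l (chi N)"
    by (simp add: w_def)
  have hw: "homogeneous 1 w"
    using w by (simp add: sl_lin_eq Lam_deg_iff)
  have "wedge x g = wedge w a + wedge (chi N) (ext_scale l a - wedge w b)"
    unfolding x_eq g_eq
    by (simp add: wedge_add_left wedge_add_right wedge_scale_left wedge_diff_right wedge_scale_right
        wedge_anticommute_odd[OF hw homogeneous_chi] wedge_wedge_self_eq_0[OF homogeneous_chi]
        algebra_simps)
  moreover have "wedge w a \<in> sl_deg N (Suc R)"
    by (rule wedge_sl_lin_in_sl_deg[OF w a])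
  moreover have "ext_scale l a - wedge w b \<in> shift (sl_deg N) (Suc R)"
  proof -
    have "wedge w b \<in> sl_deg N R"
    proof (cases "R = 0")
      case True
      then show ?thesis
        using b Ext.subspace_0[OF subspace_sl_deg] by (simp add: shift_def)
    next
      case False
      then show ?thesis
        using b wedge_sl_lin_in_sl_deg[OF w, of b "R - 1"] by (simp add: shift_def)
    qed
    then show ?thesis
      using a by (simp add: shift_def Ext.subspace_diff[OF subspace_sl_deg] Ext.subspace_scale[OF subspace_sl_deg])
  qed
  ultimately show ?thesis
    unfolding chi_sum_def by blast
qed

definition monomial :: "gen set \<Rightarrow> ext" where
  "monomial S = (\<lambda>U. if U = S then 1 else 0)"

lemma wedge_Psi_monomial:
  assumes "(i, j) \<notin> T" "finite T"
  shows "wedge (Psi i j) (monomial T) = ext_scale (wsign {(i, j)} T) (monomial (insert (i, j) T))"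
proof (rule ext)
  fix U
  show "wedge (Psi i j) (monomial T) U = ext_scale (wsign {(i, j)} T) (monomial (insert (i, j) T)) U"
  proof (cases "U = insert (i, j) T")
    case True
    then have "U - {(i, j)} = T"
      using assms by auto
    then show ?thesis
      using True assms by (simp add: wedge_Psi_apply monomial_def)
  next
    case False
    then have "\<not> ((i, j) \<in> U \<and> U - {(i, j)} = T)"
      by auto
    then show ?thesis
      using False by (auto simp: wedge_Psi_apply monomial_def)
  qed
qed

lemma monomial_in_chi_sum:
  assumes N: "N > 0" and S: "S \<subseteq> gens N"
  shows "monomial S \<in> chi_sum N (sl_deg N (card S)) (shift (sl_deg N) (card S))"
proof -
  have "finite S"
    using S finite_subset by (auto simp: gens_def)
  then show ?thesis
    using S
  proof (induction S rule: finite_induct)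
    case empty
    have "monomial {} = ext_one + wedge (chi N) 0"
      by (simp add: monomial_def ext_one_def fun_eq_iff)
    then show ?case
      unfolding chi_sum_def using ext_one_in_sl_deg by (force simp: shift_def)
  next
    case (insert h T)
    obtain i j where h: "h = (i, j)"
      by (cases h)
    have ij: "i < N" "j < N"
      using insert(4) h by (auto simp: gens_def)
    have "wedge (Psi i j) (monomial T) = ext_scale (wsign {(i, j)} T) (monomial (insert (i, j) T))"
      using insert h by (intro wedge_Psi_monomial) auto
    then have "monomial (insert h T) = ext_scale (wsign {(i, j)} T) (wedge (Psi i j) (monomial T))"
      using h by (simp add: fun_eq_iff mult.assoc[symmetric])
    moreover have "wedge (Psi i j) (monomial T) \<in> chi_sum N (sl_deg N (Suc (card T))) (shift (sl_deg N) (Suc (card T)))"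
      using insert ij by (intro wedge_Lam_deg_one_chi_sum[OF N] Psi_in_Lam_deg) auto
    moreover have "card (insert h T) = Suc (card T)"
      using insert(1,2) by simp
    moreover have "Ext.subspace (chi_sum N (sl_deg N (Suc (card T))) (shift (sl_deg N) (Suc (card T))))"
      by (rule subspace_chi_sum[OF subspace_sl_deg subspace_shift_sl_deg])
    ultimately show ?case
      by (metis Ext.subspace_scale)
  qed
qed

lemma Lam_expand:
  assumes "f \<in> Lam N"
  shows "f = (\<Sum>S\<in>Pow (gens N). ext_scale (f S) (monomial S))"
proof (rule ext)
  fix U
  have "(\<Sum>S\<in>Pow (gens N). ext_scale (f S) (monomial S)) U = (\<Sum>S\<in>Pow (gens N). if S = U then f U else 0)"
    unfolding sum_fun_apply by (intro sum.cong) (auto simp: monomial_def)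
  also have "\<dots> = f U"
    using assms by (subst sum.delta) (auto simp: Lam_def gens_def)
  finally show "f U = (\<Sum>S\<in>Pow (gens N). ext_scale (f S) (monomial S)) U"
    by simp
qed

lemma Lam_subset_span_monomials: "Lam N \<subseteq> Ext.span (monomial ` Pow (gens N))"
proof
  fix f assume f: "f \<in> Lam N"
  have "(\<Sum>S\<in>Pow (gens N). ext_scale (f S) (monomial S)) \<in> Ext.span (monomial ` Pow (gens N))"
    by (intro Ext.span_sum Ext.span_scale Ext.span_base) auto
  then show "f \<in> Ext.span (monomial ` Pow (gens N))"
    using Lam_expand[OF f] by simp
qed

lemma Lam_deg_eq_chi_sum:
  assumes N: "N > 0"
  shows "Lam_deg N R = chi_sum N (sl_deg N R) (shift (sl_deg N) R)"
proof
  show "Lam_deg N R \<subseteq> chi_sum N (sl_deg N R) (shift (sl_deg N) R)"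
  proof
    fix f assume f: "f \<in> Lam_deg N R"
    have sub: "Ext.subspace (chi_sum N (sl_deg N R) (shift (sl_deg N) R))"
      by (rule subspace_chi_sum[OF subspace_sl_deg subspace_shift_sl_deg])
    have "ext_scale (f S) (monomial S) \<in> chi_sum N (sl_deg N R) (shift (sl_deg N) R)"
      if "S \<subseteq> gens N" for S
    proof (cases "f S = 0")
      case True
      then show ?thesis
        using Ext.subspace_0[OF sub] by simp
    next
      case False
      then have "card S = R"
        using f by (simp add: Lam_deg_def)
      then show ?thesis
        using monomial_in_chi_sum[OF N that] by (intro Ext.subspace_scale[OF sub]) simp
    qed
    then have "(\<Sum>S\<in>Pow (gens N). ext_scale (f S) (monomial S)) \<in> chi_sum N (sl_deg N R) (shift (sl_deg N) R)"
      by (intro Ext.subspace_sum[OF sub]) simp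
    then show "f \<in> chi_sum N (sl_deg N R) (shift (sl_deg N) R)"
      using Lam_expand f by (simp add: Lam_deg_def)
  qed
next
  show "chi_sum N (sl_deg N R) (shift (sl_deg N) R) \<subseteq> Lam_deg N R"
    unfolding chi_sum_def
    using sl_deg_subset_Lam_deg wedge_chi_in_Lam_deg Ext.subspace_add[OF subspace_Lam_deg] by blast
qed

section \<open>Cohomology\<close>

lemma finite_monomials: "finite (monomial ` Pow (gens N))"
  by (simp add: gens_def)

lemma cdim_chi_sum:
  assumes N: "N > 0"
    and X: "Ext.subspace X" "X \<subseteq> sl_deg N R" and Y: "Ext.subspace Y" "Y \<subseteq> shift (sl_deg N) R"
  shows "cdim (chi_sum N X Y) = cdim X + cdim Y"
proof -
  let ?W = "monomial ` Pow (gens N)"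
  have "X \<subseteq> Lam N" "wedge (chi N) ` Y \<subseteq> Lam N" "Y \<subseteq> Lam N"
    using X(2) Y(2) sl_deg_subset_Lam_deg wedge_chi_in_Lam_deg shift_sl_deg_subset_Lam_deg
    by (fastforce simp: Lam_deg_def)+
  then have span: "X \<subseteq> Ext.span ?W" "wedge (chi N) ` Y \<subseteq> Ext.span ?W" "Y \<subseteq> Ext.span ?W"
    using Lam_subset_span_monomials by blast+
  have inverse: "contract_chi N (wedge (chi N) y) = y" if "y \<in> Y" for y
    using that Y(2) contract_chi_wedge_chi[OF N] finitary_if_shift_sl_deg contract_chi_shift_sl_deg
    by blast
  then have inj: "inj_on (wedge (chi N)) Y"
    by (metis inj_onI)
  have "X \<inter> wedge (chi N) ` Y = {0}"
  proof (intro equalityI subsetI)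
    fix z assume "z \<in> X \<inter> wedge (chi N) ` Y"
    then obtain y where "z \<in> X" "y \<in> Y" "z = wedge (chi N) y"
      by blast
    moreover have "contract_chi N z = 0"
      using \<open>z \<in> X\<close> X(2) contract_chi_sl_deg by blast
    ultimately show "z \<in> {0}"
      using inverse by force
  qed (use Ext.subspace_0[OF X(1)] Ext.subspace_0[OF Y(1)] in force)
  then have "cdim (chi_sum N X Y) = cdim X + cdim (wedge (chi N) ` Y)"
    unfolding cdim_def chi_sum_eq_sums
    using module_hom.subspace_image[OF module_hom_wedge_right Y(1)]
    by (intro Ext.dim_sums_disjoint[OF X(1) _ _ span(1,2) finite_monomials])
  also have "cdim (wedge (chi N) ` Y) = cdim Y"
    unfolding cdim_def by (rule Ext.dim_image_inj_on[OF module_hom_wedge_right Y(1) inj span(3) finite_monomials])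
  finally show ?thesis .
qed

lemma homogeneous_TrA:
  assumes "N > 0"
  shows "homogeneous p (TrA N p)"
proof -
  have "TrA N p \<in> Lam_deg N p"
    using TrA_in_sl_deg[OF assms] sl_deg_subset_Lam_deg by blast
  then show ?thesis
    by (simp add: Lam_deg_iff)
qed

lemma wedge_TrA_TrA: "N > 0 \<Longrightarrow> odd p \<Longrightarrow> wedge (TrA N p) (TrA N p) = 0"
  by (rule wedge_self_eq_0[OF homogeneous_TrA])

lemma wedge_TrA_chi:
  assumes "N > 0" "odd p"
  shows "wedge (TrA N p) (wedge (chi N) b) = - wedge (chi N) (wedge (TrA N p) b)"
  by (rule wedge_anticommute_odd[OF homogeneous_TrA[OF assms(1)] homogeneous_chi assms(2) odd_one])

lemma wedge_TrA_sl_deg: "N > 0 \<Longrightarrow> a \<in> sl_deg N m \<Longrightarrow> wedge (TrA N p) a \<in> sl_deg N (m + p)"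
  using wedge_in_sl_deg[OF TrA_in_sl_deg] by (simp add: add.commute)

lemma wedge_TrA_shift:
  assumes "N > 0" "b \<in> shift (sl_deg N) m"
  shows "wedge (TrA N p) b \<in> shift (sl_deg N) (m + p)"
proof (cases "m = 0")
  case True
  then have "b = 0"
    using assms(2) by (simp add: shift_def)
  then show ?thesis
    using Ext.subspace_0[OF subspace_shift_sl_deg] by simp
next
  case False
  then have "b \<in> sl_deg N (m - 1)"
    using assms(2) by (simp add: shift_def)
  then have "wedge (TrA N p) b \<in> sl_deg N (m - 1 + p)"
    by (rule wedge_TrA_sl_deg[OF assms(1)])
  moreover have "m - 1 + p = m + p - 1"
    using False by simp
  ultimately show ?thesis
    using False by (simp add: shift_def)
qed

text \<open>Since \<open>TrA\<close> anticommutes with \<open>chi\<close>, the differential acts on \<open>a + chi \<and> b\<close> componentwise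
  (up to a sign on the second component); uniqueness of the splitting does the rest.\<close>

lemma kernel_chi_sum:
  assumes N: "N > 0" and p: "odd p"
  shows "{v \<in> Lam_deg N R. wedge (TrA N p) v = 0}
    = chi_sum N {v \<in> sl_deg N R. wedge (TrA N p) v = 0} {v \<in> shift (sl_deg N) R. wedge (TrA N p) v = 0}"
  (is "?L = ?R")
proof
  show "?L \<subseteq> ?R"
  proof
    fix v assume v: "v \<in> ?L"
    then obtain a b where a: "a \<in> sl_deg N R" and b: "b \<in> shift (sl_deg N) R"
      and v_eq: "v = a + wedge (chi N) b"
      using Lam_deg_eq_chi_sum[OF N] by (auto simp: chi_sum_def)
    have "wedge (TrA N p) a + wedge (chi N) (- wedge (TrA N p) b) = 0 + wedge (chi N) 0"
      using v unfolding v_eq by (simp add: wedge_add_right wedge_TrA_chi[OF N p] wedge_uminus_right)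
    moreover have "wedge (TrA N p) a \<in> sl_deg N (R + p)"
      by (rule wedge_TrA_sl_deg[OF N a])
    moreover have "- wedge (TrA N p) b \<in> shift (sl_deg N) (R + p)"
      by (rule Ext.subspace_neg[OF subspace_shift_sl_deg wedge_TrA_shift[OF N b]])
    ultimately have "wedge (TrA N p) a = 0 \<and> - wedge (TrA N p) b = 0"
      using Ext.subspace_0[OF subspace_sl_deg] Ext.subspace_0[OF subspace_shift_sl_deg]
      by (intro chi_sum_unique[OF N]) auto
    then show "v \<in> ?R"
      unfolding chi_sum_def using a b v_eq by auto
  qed
next
  show "?R \<subseteq> ?L"
  proof
    fix v assume "v \<in> ?R"
    then obtain a b where a: "a \<in> sl_deg N R" "wedge (TrA N p) a = 0"
      and b: "b \<in> shift (sl_deg N) R" "wedge (TrA N p) b = 0" and v_eq: "v = a + wedge (chi N) b"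
      by (auto simp: chi_sum_def)
    have "v \<in> Lam_deg N R"
      using Lam_deg_eq_chi_sum[OF N] a(1) b(1) v_eq by (auto simp: chi_sum_def)
    moreover have "wedge (TrA N p) v = 0"
      unfolding v_eq by (simp add: wedge_add_right wedge_TrA_chi[OF N p] a(2) b(2))
    ultimately show "v \<in> ?L"
      by simp
  qed
qed

lemma image_chi_sum:
  assumes N: "N > 0" and p: "odd p"
  shows "wedge (TrA N p) ` Lam_deg N m
    = chi_sum N (wedge (TrA N p) ` sl_deg N m) (wedge (TrA N p) ` shift (sl_deg N) m)"
  (is "?L = ?R")
proof
  show "?L \<subseteq> ?R"
  proof
    fix z assume "z \<in> ?L"
    then obtain a b where a: "a \<in> sl_deg N m" and b: "b \<in> shift (sl_deg N) m"
      and z: "z = wedge (TrA N p) (a + wedge (chi N) b)"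
      using Lam_deg_eq_chi_sum[OF N] by (auto simp: chi_sum_def)
    have "z = wedge (TrA N p) a + wedge (chi N) (wedge (TrA N p) (- b))"
      unfolding z by (simp add: wedge_add_right wedge_TrA_chi[OF N p] wedge_uminus_right)
    moreover have "- b \<in> shift (sl_deg N) m"
      by (rule Ext.subspace_neg[OF subspace_shift_sl_deg b])
    ultimately show "z \<in> ?R"
      unfolding chi_sum_def using a by blast
  qed
next
  show "?R \<subseteq> ?L"
  proof
    fix z assume "z \<in> ?R"
    then obtain a b where a: "a \<in> sl_deg N m" and b: "b \<in> shift (sl_deg N) m"
      and z: "z = wedge (TrA N p) a + wedge (chi N) (wedge (TrA N p) b)"
      by (auto simp: chi_sum_def)
    have "- b \<in> shift (sl_deg N) m"
      by (rule Ext.subspace_neg[OF subspace_shift_sl_deg b])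
    then have "a + wedge (chi N) (- b) \<in> Lam_deg N m"
      using Lam_deg_eq_chi_sum[OF N] a by (auto simp: chi_sum_def)
    moreover have "z = wedge (TrA N p) (a + wedge (chi N) (- b))"
      unfolding z by (simp add: wedge_add_right wedge_diff_right wedge_TrA_chi[OF N p] wedge_uminus_right)
    ultimately show "z \<in> ?L"
      by blast
  qed
qed

lemma cdim_image_le_cdim_kernel:
  assumes "wedge w ` C m \<subseteq> C (m + p)" "wedge w w = 0" "C (m + p) \<subseteq> Lam N"
  shows "cdim (wedge w ` C m) \<le> cdim {v \<in> C (m + p). wedge w v = 0}"
  unfolding cdim_def
proof (rule Ext.dim_mono_finite[OF _ _ finite_monomials])
  have "wedge w (wedge w a) = 0" for a
    using assms(2) by (simp add: wedge_assoc[symmetric])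
  then show "wedge w ` C m \<subseteq> {v \<in> C (m + p). wedge w v = 0}"
    using assms(1) by auto
  show "{v \<in> C (m + p). wedge w v = 0} \<subseteq> Ext.span (monomial ` Pow (gens N))"
    using assms(3) Lam_subset_span_monomials by blast
qed

lemma cdim_kernel_Lam_deg:
  assumes N: "N > 0" and p: "odd p"
  shows "cdim {v \<in> Lam_deg N R. wedge (TrA N p) v = 0}
    = cdim {v \<in> sl_deg N R. wedge (TrA N p) v = 0} + cdim {v \<in> shift (sl_deg N) R. wedge (TrA N p) v = 0}"
proof -
  interpret Q: module_hom ext_scale ext_scale "wedge (TrA N p)"
    by (rule module_hom_wedge_right)
  have kernel: "{v \<in> C. wedge (TrA N p) v = 0} = C \<inter> {v. wedge (TrA N p) v = 0}" for C
    by blast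
  show ?thesis
    unfolding kernel_chi_sum[OF N p]
    by (rule cdim_chi_sum[OF N]) (auto simp only: kernel intro: Ext.subspace_inter Q.subspace_kernel
        subspace_sl_deg subspace_shift_sl_deg)
qed

lemma cdim_image_Lam_deg:
  assumes N: "N > 0" and p: "odd p"
  shows "cdim (wedge (TrA N p) ` Lam_deg N m)
    = cdim (wedge (TrA N p) ` sl_deg N m) + cdim (wedge (TrA N p) ` shift (sl_deg N) m)"
proof -
  interpret Q: module_hom ext_scale ext_scale "wedge (TrA N p)"
    by (rule module_hom_wedge_right)
  show ?thesis
    unfolding image_chi_sum[OF N p]
  proof (rule cdim_chi_sum[OF N])
    show "wedge (TrA N p) ` sl_deg N m \<subseteq> sl_deg N (m + p)"
      using wedge_TrA_sl_deg[OF N] by blast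
    show "wedge (TrA N p) ` shift (sl_deg N) m \<subseteq> shift (sl_deg N) (m + p)"
      using wedge_TrA_shift[OF N] by blast
  qed (intro Q.subspace_image subspace_sl_deg subspace_shift_sl_deg)+
qed

lemma cdim_image_le_cdim_kernel_sl_deg:
  assumes N: "N > 0" and p: "odd p"
  shows "cdim (wedge (TrA N p) ` sl_deg N m) \<le> cdim {v \<in> sl_deg N (m + p). wedge (TrA N p) v = 0}"
proof (rule cdim_image_le_cdim_kernel[OF _ wedge_TrA_TrA[OF N p]])
  show "wedge (TrA N p) ` sl_deg N m \<subseteq> sl_deg N (m + p)"
    using wedge_TrA_sl_deg[OF N] by blast
  show "sl_deg N (m + p) \<subseteq> Lam N"
    using sl_deg_subset_Lam_deg by (force simp: Lam_deg_def)
qed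

lemma cdim_image_le_cdim_kernel_shift:
  assumes N: "N > 0" and p: "odd p"
  shows "cdim (wedge (TrA N p) ` shift (sl_deg N) m)
    \<le> cdim {v \<in> shift (sl_deg N) (m + p). wedge (TrA N p) v = 0}"
proof (rule cdim_image_le_cdim_kernel[OF _ wedge_TrA_TrA[OF N p]])
  show "wedge (TrA N p) ` shift (sl_deg N) m \<subseteq> shift (sl_deg N) (m + p)"
    using wedge_TrA_shift[OF N] by blast
  show "shift (sl_deg N) (m + p) \<subseteq> Lam N"
    using shift_sl_deg_subset_Lam_deg by (force simp: Lam_deg_def)
qed

lemma coh_dim_Lam_deg_eq_sum:
  assumes N: "N > 0" and p: "odd p"
  shows "coh_dim (Lam_deg N) (TrA N p) p R
    = coh_dim (sl_deg N) (TrA N p) p R + coh_dim (shift (sl_deg N)) (TrA N p) p R"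
proof (cases "R < p")
  case True
  then show ?thesis
    by (simp add: coh_dim_def ext_zero_eq cdim_kernel_Lam_deg[OF N p])
next
  case False
  then have "R - p + p = R"
    by simp
  then show ?thesis
    using False cdim_image_le_cdim_kernel_sl_deg[OF N p, of "R - p"]
      cdim_image_le_cdim_kernel_shift[OF N p, of "R - p"]
    by (simp add: coh_dim_def ext_zero_eq cdim_kernel_Lam_deg[OF N p] cdim_image_Lam_deg[OF N p])
qed

lemma coh_dim_shift: "coh_dim (shift C) w p R = (if R = 0 then 0 else coh_dim C w p (R - 1))"
proof (cases "R = 0")
  case True
  then have "{v \<in> shift C R. wedge w v = ext_zero} = {0}"
    by (auto simp: shift_def ext_zero_eq)
  then show ?thesis
    using True by (simp add: coh_dim_def cdim_def Ext.dim_zero_space)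
next
  case False
  have "wedge w ` shift C (R - p) = wedge w ` C (R - 1 - p)" if "R > p"
    using that by (simp add: shift_def)
  moreover have "cdim (wedge w ` shift C (R - p)) = 0" if "R = p"
    using that by (simp add: shift_def cdim_def Ext.dim_zero_space)
  ultimately show ?thesis
    using False by (auto simp: coh_dim_def shift_def not_less)
qed

theorem h_BPS_eq:
  assumes "N > 0" "p \<ge> 3" "odd p"
  shows "h_BPS N p R = h_red N p R + (if R = 0 then 0 else h_red N p (R - 1))"
  using coh_dim_Lam_deg_eq_sum[OF assms(1,3)]
  by (simp add: h_BPS_def h_red_def TrPsi_eq_TrA[OF assms(2,3)] coh_dim_shift)

lemma Lam_deg_eq_0_above:
  assumes "R > N * N" "f \<in> Lam_deg N R"
  shows "f = 0"
proof (rule ext)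
  fix S
  show "f S = 0 S"
  proof (rule ccontr)
    assume "f S \<noteq> 0 S"
    then have "S \<subseteq> gens N" "card S = R"
      using assms(2) by (auto simp: Lam_deg_def Lam_def)
    then have "R \<le> card (gens N)"
      by (metis card_mono finite_SigmaI finite_atLeastLessThan gens_def)
    then show False
      using assms(1) by (simp add: gens_def)
  qed
qed

lemma sl_deg_top_eq_0:
  assumes N: "N > 0" and a: "a \<in> sl_deg N (N * N)"
  shows "a = 0"
proof -
  have "a \<in> shift (sl_deg N) (Suc (N * N))"
    using a by (simp add: shift_def)
  then have "wedge (chi N) a = 0"
    by (intro Lam_deg_eq_0_above[of N "Suc (N * N)"] wedge_chi_in_Lam_deg) auto
  then show ?thesis
    using contract_chi_wedge_chi[OF N finitary_if_sl_deg[OF a] contract_chi_sl_deg[OF a]]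
      module_hom.zero[OF module_hom_contract_chi]
    by metis
qed

lemma h_red_top:
  assumes "N > 0"
  shows "h_red N p (N\<^sup>2) = 0"
proof -
  have "{v \<in> sl_deg N (N\<^sup>2). wedge (TrA N p) v = ext_zero} = {0}"
    using sl_deg_top_eq_0[OF assms] Ext.subspace_0[OF subspace_sl_deg]
    by (auto simp: power2_eq_square ext_zero_eq)
  then show ?thesis
    by (simp add: h_red_def coh_dim_def cdim_def Ext.dim_zero_space)
qed

lemma sum_monom_mult_one_plus_X:
  fixes a :: "nat \<Rightarrow> 'a :: comm_semiring_1"
  assumes "a M = 0"
  shows "(\<Sum>R\<le>M. monom (a R + (if R = 0 then 0 else a (R - 1))) R) = [:1, 1:] * (\<Sum>R\<le>M. monom (a R) R)"
proof (rule poly_eqI)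
  fix n
  let ?Z = "\<Sum>R\<le>M. monom (a R) R"
  have coeff_Z: "coeff ?Z k = (if k \<le> M then a k else 0)" for k
    by (simp add: coeff_sum coeff_monom)
  have "[:1, 1:] * ?Z = ?Z + pCons 0 ?Z"
    by (simp only: mult_pCons_left smult_1_left mult_zero_left pCons_0_0 add_0_right)
  then have "coeff ([:1, 1:] * ?Z) n = coeff ?Z n + (if n = 0 then 0 else coeff ?Z (n - 1))"
    by (cases n) simp_all
  then show "coeff (\<Sum>R\<le>M. monom (a R + (if R = 0 then 0 else a (R - 1))) R) n = coeff ([:1, 1:] * ?Z) n"
    using assms by (cases "n = Suc M") (auto simp: coeff_sum coeff_monom coeff_Z)
qed

theorem Z_BPS_eq:
  assumes "N > 0" "p \<ge> 3" "odd p"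
  shows "Z_BPS N p = [:1, 1:] * Z_red N p"
  unfolding Z_BPS_def Z_red_def h_BPS_eq[OF assms]
  by (rule sum_monom_mult_one_plus_X[of "h_red N p", OF h_red_top[OF assms(1)]])

lemma Lam_deg_unique_decomposition:
  assumes N: "N > 0" and f: "f \<in> Lam_deg N R"
  shows "\<exists>!ab. fst ab \<in> sl_deg N R \<and> snd ab \<in> shift (sl_deg N) R \<and> f = fst ab + wedge (chi N) (snd ab)"
proof -
  have "f \<in> chi_sum N (sl_deg N R) (shift (sl_deg N) R)"
    using Lam_deg_eq_chi_sum[OF N] f by blast
  then obtain a b where ab: "a \<in> sl_deg N R" "b \<in> shift (sl_deg N) R" "f = a + wedge (chi N) b"
    unfolding chi_sum_def by blast
  show ?thesis
  proof (rule ex1I[of _ "(a, b)"])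
    fix ab' assume ab': "fst ab' \<in> sl_deg N R \<and> snd ab' \<in> shift (sl_deg N) R
      \<and> f = fst ab' + wedge (chi N) (snd ab')"
    then have "fst ab' = a \<and> snd ab' = b"
      using chi_sum_unique[OF N, of "fst ab'" R a "snd ab'" b] ab by argo
    then show "ab' = (a, b)"
      by (simp add: prod_eq_iff)
  qed (use ab in simp)
qed

theorem mainTheorem1:
  fixes N p :: nat
  assumes "N \<ge> 2" and "p \<ge> 3" and "odd p"
  shows "TrPsi N p = TrA N p
    \<and> (\<forall>R. \<forall>f \<in> Lam_deg N R. \<exists>!ab. fst ab \<in> sl_deg N R
          \<and> snd ab \<in> (if R = 0 then {ext_zero} else sl_deg N (R - 1))
          \<and> f = ext_add (fst ab) (wedge (chi N) (snd ab)))
    \<and> Z_BPS N p = [:1, 1:] * Z_red N p"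
proof -
  have N: "N > 0"
    using assms(1) by simp
  have shift_eq: "(if R = 0 then {ext_zero} else sl_deg N (R - 1)) = shift (sl_deg N) R" for R
    by (simp add: shift_def ext_zero_eq)
  show ?thesis
  proof (intro conjI allI ballI)
    show "TrPsi N p = TrA N p"
      by (rule TrPsi_eq_TrA[OF assms(2,3)])
    show "Z_BPS N p = [:1, 1:] * Z_red N p"
      by (rule Z_BPS_eq[OF N assms(2,3)])
    fix R f assume "f \<in> Lam_deg N R"
    then show "\<exists>!ab. fst ab \<in> sl_deg N R
          \<and> snd ab \<in> (if R = 0 then {ext_zero} else sl_deg N (R - 1))
          \<and> f = ext_add (fst ab) (wedge (chi N) (snd ab))"
      unfolding shift_eq ext_add_eq by (rule Lam_deg_unique_decomposition[OF N])
  qed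
qed

end
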